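(* For every prime $p\geq 2$, $SD(\mathbb{Q}_p)=\{\mathrm{id}\}$.
   Context: $\mathbb{Q}_p$ denotes the field of $p$-adic numbers. For fields $\mathbb{F},\widetilde{\mathbb{F}}$, a map $f:\mathbb{F}\to\widetilde{\mathbb{F}}$ is called an SD-map if for all $x\neq y$ in $\mathbb{F}$ one has $f(x)\neq f(y)$ and \[ f\left(\frac{x+y}{x-y}\right)=\frac{f(x)+f(y)}{f(x)-f(y)}. \] For a field $\mathbb{F}$, $SD(\mathbb{F})$ denotes the set of surjective SD-maps $f:\mathbb{F}\to\mathbb{F}$ (no continuity is assumed). *)

theory Defs
  imports Complex_Main "HOL-Computational_Algebra.Primes"
begin

text \<open>The field of p-adic numbers, constructed as the completion of the rationals
with respect to the p-adic absolute value: equivalence classes of p-adic Cauchy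
sequences of rationals modulo p-adic null sequences.\<close>

definition padic_abs :: "nat \<Rightarrow> rat \<Rightarrow> real" where
  "padic_abs p q =
     (if q = 0 then 0
      else (let (a, b) = quotient_of q in
            real p powr (- (real (multiplicity (int p) a) - real (multiplicity (int p) b)))))"

definition padic_cauchy :: "nat \<Rightarrow> (nat \<Rightarrow> rat) \<Rightarrow> bool" where
  "padic_cauchy p X \<longleftrightarrow>
     (\<forall>e>0. \<exists>N. \<forall>m\<ge>N. \<forall>n\<ge>N. padic_abs p (X m - X n) < e)"

definition padic_equiv :: "nat \<Rightarrow> (nat \<Rightarrow> rat) \<Rightarrow> (nat \<Rightarrow> rat) \<Rightarrow> bool" where
  "padic_equiv p X Y \<longleftrightarrow> (\<lambda>n. padic_abs p (X n - Y n)) \<longlonglongrightarrow> 0"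

definition padic_class :: "nat \<Rightarrow> (nat \<Rightarrow> rat) \<Rightarrow> (nat \<Rightarrow> rat) set" where
  "padic_class p X = {Y. padic_cauchy p Y \<and> padic_equiv p X Y}"

definition padic :: "nat \<Rightarrow> (nat \<Rightarrow> rat) set set" where
  "padic p = {padic_class p X | X. padic_cauchy p X}"

definition padic_rep :: "(nat \<Rightarrow> rat) set \<Rightarrow> nat \<Rightarrow> rat" where
  "padic_rep x = (SOME X. X \<in> x)"

definition padic_zero :: "nat \<Rightarrow> (nat \<Rightarrow> rat) set" where
  "padic_zero p = padic_class p (\<lambda>n. 0)"

definition padic_add :: "nat \<Rightarrow> (nat \<Rightarrow> rat) set \<Rightarrow> (nat \<Rightarrow> rat) set \<Rightarrow> (nat \<Rightarrow> rat) set" where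
  "padic_add p x y = padic_class p (\<lambda>n. padic_rep x n + padic_rep y n)"

definition padic_sub :: "nat \<Rightarrow> (nat \<Rightarrow> rat) set \<Rightarrow> (nat \<Rightarrow> rat) set \<Rightarrow> (nat \<Rightarrow> rat) set" where
  "padic_sub p x y = padic_class p (\<lambda>n. padic_rep x n - padic_rep y n)"

definition padic_mult :: "nat \<Rightarrow> (nat \<Rightarrow> rat) set \<Rightarrow> (nat \<Rightarrow> rat) set \<Rightarrow> (nat \<Rightarrow> rat) set" where
  "padic_mult p x y = padic_class p (\<lambda>n. padic_rep x n * padic_rep y n)"

text \<open>Inverse (a nonzero class has a representative that is eventually nonzero;
the finitely many zero terms are replaced by 0, which does not change the class).\<close>
definition padic_inverse :: "nat \<Rightarrow> (nat \<Rightarrow> rat) set \<Rightarrow> (nat \<Rightarrow> rat) set" where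
  "padic_inverse p x =
     (if x = padic_zero p then padic_zero p
      else padic_class p (\<lambda>n. inverse (padic_rep x n)))"

definition padic_divide :: "nat \<Rightarrow> (nat \<Rightarrow> rat) set \<Rightarrow> (nat \<Rightarrow> rat) set \<Rightarrow> (nat \<Rightarrow> rat) set" where
  "padic_divide p x y = padic_mult p x (padic_inverse p y)"

definition padic_SD_map :: "nat \<Rightarrow> ((nat \<Rightarrow> rat) set \<Rightarrow> (nat \<Rightarrow> rat) set) \<Rightarrow> bool" where
  "padic_SD_map p f \<longleftrightarrow>
     (\<forall>x\<in>padic p. f x \<in> padic p) \<and>
     (\<forall>x\<in>padic p. \<forall>y\<in>padic p. x \<noteq> y \<longrightarrow>
        f x \<noteq> f y \<and>
        f (padic_divide p (padic_add p x y) (padic_sub p x y)) =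
          padic_divide p (padic_add p (f x) (f y)) (padic_sub p (f x) (f y)))"

definition padic_SD :: "nat \<Rightarrow> ((nat \<Rightarrow> rat) set \<Rightarrow> (nat \<Rightarrow> rat) set) set" where
  "padic_SD p = {f. padic_SD_map p f \<and> f ` padic p = padic p}"

end

(*
  An SD-map f fixes 0 and 1, is multiplicative and satisfies
  f (x + y) (f x - f y) = (f x + f y) f (x - y); evaluated at small integers this forces
  f 2 = 2, and then f fixes every rational number.

  In Q_p every principal unit is a square and every unit is a rational unit times a principal
  unit.  Hence for a principal unit y the valuation of f y is divisible by every power of 2, so it
  vanishes, and f preserves the p-adic valuation v.

  Finally write x = r (1 + s) with r rational and v s large.  The identity above, applied to
  t = 1 + 2 / s and 1, gives v (f (1 + s) - 1) = v s, hence v (f x - x) >= v x + v s, which is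
  impossible for large v s unless f x = x.
*)

theory Submission
  imports Defs "HOL-Algebra.Ring"
begin

section \<open>The p-adic valuation on the rationals\<close>

definition padic_val :: "nat \<Rightarrow> rat \<Rightarrow> int" where
  "padic_val p q =
     (let (a, b) = quotient_of q in int (multiplicity (int p) a) - int (multiplicity (int p) b))"

text \<open>\<open>padic_val p 0 = 0\<close> is a junk value; \<open>padic_val_ge\<close> treats \<open>0\<close> as having every
  valuation.\<close>

definition padic_val_ge :: "nat \<Rightarrow> rat \<Rightarrow> int \<Rightarrow> bool" where
  "padic_val_ge p q k \<longleftrightarrow> q = 0 \<or> k \<le> padic_val p q"

lemma rat_int_fraction:
  fixes q :: rat
  obtains a b :: int where "q = of_int a / of_int b" "b \<noteq> 0" "q \<noteq> 0 \<Longrightarrow> a \<noteq> 0"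
proof -
  obtain a b where q: "quotient_of q = (a, b)" by (cases "quotient_of q")
  show ?thesis using that[of a b] quotient_of_div[OF q] quotient_of_denom_pos[OF q] by auto
qed

locale prime_padic =
  fixes p :: nat
  assumes prime_p: "prime p"
begin

lemma prime_elem_p: "prime_elem (int p)"
  using prime_p by simp

lemma not_unit_p: "\<not> is_unit (int p)"
  using prime_elem_p prime_elem_def by blast

lemma padic_val_fraction:
  fixes a b :: int
  assumes "a \<noteq> 0" "b \<noteq> 0"
  shows "padic_val p (of_int a / of_int b) =
    int (multiplicity (int p) a) - int (multiplicity (int p) b)"
proof -
  obtain a' b' where q: "quotient_of (of_int a / of_int b) = (a', b')"
    by (cases "quotient_of (of_int a / of_int b)")
  have "b' > 0" using quotient_of_denom_pos[OF q] .
  moreover have "(of_int a / of_int b :: rat) = of_int a' / of_int b'" using quotient_of_div[OF q] .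
  ultimately have "of_int (a * b') = (of_int (a' * b) :: rat)" using assms
    by (simp add: field_simps)
  then have cross: "a * b' = a' * b" by (metis of_int_eq_iff)
  with assms \<open>b' > 0\<close> have "a' \<noteq> 0" by auto
  with cross assms \<open>b' > 0\<close>
  have "multiplicity (int p) a + multiplicity (int p) b' =
      multiplicity (int p) a' + multiplicity (int p) b"
    using prime_elem_multiplicity_mult_distrib[OF prime_elem_p] by (metis less_irrefl)
  then show ?thesis unfolding padic_val_def q by simp
qed

lemma padic_val_of_int: "a \<noteq> 0 \<Longrightarrow> padic_val p (of_int a) = int (multiplicity (int p) a)"
  using padic_val_fraction[of a 1] by simp

lemma padic_val_mult:
  assumes "x \<noteq> 0" "y \<noteq> 0"
  shows "padic_val p (x * y) = padic_val p x + padic_val p y"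
proof -
  obtain a b where x: "x = of_int a / of_int b" "b \<noteq> 0" "a \<noteq> 0"
    using rat_int_fraction[of x] assms by metis
  obtain c d where y: "y = of_int c / of_int d" "d \<noteq> 0" "c \<noteq> 0"
    using rat_int_fraction[of y] assms by metis
  have "x * y = of_int (a * c) / of_int (b * d)" using x y by simp
  then have "padic_val p (x * y) =
      int (multiplicity (int p) (a * c)) - int (multiplicity (int p) (b * d))"
    using x y padic_val_fraction[of "a * c" "b * d"] by simp
  then show ?thesis
    using x y padic_val_fraction prime_elem_multiplicity_mult_distrib[OF prime_elem_p] by simp
qed

lemma padic_val_one [simp]: "padic_val p 1 = 0"
  using padic_val_of_int[of 1] by simp

lemma padic_val_inverse: "x \<noteq> 0 \<Longrightarrow> padic_val p (inverse x) = - padic_val p x"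
  using padic_val_mult[of x "inverse x"] by simp

lemma padic_val_divide:
  "x \<noteq> 0 \<Longrightarrow> y \<noteq> 0 \<Longrightarrow> padic_val p (x / y) = padic_val p x - padic_val p y"
  using padic_val_mult[of x "inverse y"] padic_val_inverse[of y] by (simp add: divide_inverse)

lemma padic_val_minus [simp]: "padic_val p (- x) = padic_val p x"
proof (cases "x = 0")
  case False
  have "padic_val p (-1) = 0"
    using padic_val_of_int[of "-1"] multiplicity_unit_right[of "-1::int"] by simp
  then show ?thesis using padic_val_mult[of "-1" x] False by simp
qed simp

lemma padic_val_power_p: "padic_val p (of_nat p ^ n) = int n"
  using padic_val_of_int[of "int p ^ n"] prime_elem_p prime_gt_0_nat[OF prime_p] by simp

lemma padic_val_power_int_p: "padic_val p (of_nat p powi m) = m"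
  using padic_val_power_p[of "nat m"] padic_val_inverse padic_val_power_p[of "nat (- m)"]
    prime_gt_0_nat[OF prime_p]
  by (simp add: power_int_def power_inverse)

lemma padic_val_two: "padic_val p 2 = (if p = 2 then 1 else 0)"
proof (cases "p = 2")
  case True
  then show ?thesis using padic_val_power_p[of 1] by simp
next
  case False
  have "\<not> int p dvd 2"
  proof
    assume "int p dvd 2"
    then have "p dvd 2" by presburger
    then have "p \<le> 2" by (simp add: dvd_imp_le)
    with False prime_ge_2_nat[OF prime_p] show False by simp
  qed
  then show ?thesis
    using False padic_val_of_int[of 2] multiplicity_eq_zero_iff[of "2::int" "int p"] not_unit_p
      by simp
qed

lemma padic_val_two_nonneg: "padic_val p 2 \<ge> 0"
  by (simp add: padic_val_two)

lemma padic_val_add: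
  assumes "x \<noteq> 0" "y \<noteq> 0" "x + y \<noteq> 0"
  shows "padic_val p (x + y) \<ge> min (padic_val p x) (padic_val p y)"
proof -
  obtain a b where x: "x = of_int a / of_int b" "b \<noteq> 0" "a \<noteq> 0"
    using rat_int_fraction[of x] assms by metis
  obtain c d where y: "y = of_int c / of_int d" "d \<noteq> 0" "c \<noteq> 0"
    using rat_int_fraction[of y] assms by metis
  have sum: "x + y = of_int (a * d + c * b) / of_int (b * d)" using x y by (simp add: field_simps)
  with assms have num: "a * d + c * b \<noteq> 0" by (metis div_0 of_int_0)
  define m where "m = min (multiplicity (int p) (a * d)) (multiplicity (int p) (c * b))"
  have "int p ^ m dvd a * d" "int p ^ m dvd c * b"
    unfolding m_def by (auto intro: multiplicity_dvd')
  then have "m \<le> multiplicity (int p) (a * d + c * b)"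
    using multiplicity_geI[OF num not_unit_p] by simp
  moreover have "padic_val p (x + y) =
      int (multiplicity (int p) (a * d + c * b)) - int (multiplicity (int p) (b * d))"
    using sum padic_val_fraction[OF num, of "b * d"] x y by simp
  moreover have
    "padic_val p x = int (multiplicity (int p) (a * d)) - int (multiplicity (int p) (b * d))"
    "padic_val p y = int (multiplicity (int p) (c * b)) - int (multiplicity (int p) (b * d))"
    using x y padic_val_fraction prime_elem_multiplicity_mult_distrib[OF prime_elem_p] by simp_all
  ultimately show ?thesis unfolding m_def by linarith
qed

lemma padic_val_add_strict:
  assumes "x \<noteq> 0" "y \<noteq> 0" "padic_val p x < padic_val p y"
  shows "x + y \<noteq> 0" "padic_val p (x + y) = padic_val p x"
proof -
  show sum: "x + y \<noteq> 0"
    using assms by (metis add_eq_0_iff less_irrefl padic_val_minus)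
  have "padic_val p x \<ge> min (padic_val p (x + y)) (padic_val p y)"
    using padic_val_add[of "x + y" "- y"] sum assms by simp
  with padic_val_add[OF assms(1,2) sum] assms show "padic_val p (x + y) = padic_val p x"
    by linarith
qed

lemma padic_val_ge_zero [simp]: "padic_val_ge p 0 k"
  by (simp add: padic_val_ge_def)

lemma padic_val_ge_mono: "padic_val_ge p x k \<Longrightarrow> j \<le> k \<Longrightarrow> padic_val_ge p x j"
  by (auto simp: padic_val_ge_def)

lemma padic_val_ge_minus [simp]: "padic_val_ge p (- x) k = padic_val_ge p x k"
  by (simp add: padic_val_ge_def)

lemma padic_val_ge_diff_commute: "padic_val_ge p (x - y) k = padic_val_ge p (y - x) k"
  using padic_val_ge_minus[of "x - y"] by simp

lemma padic_val_ge_add: "padic_val_ge p x k \<Longrightarrow> padic_val_ge p y k \<Longrightarrow> padic_val_ge p (x + y) k"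
  using padic_val_add[of x y] unfolding padic_val_ge_def
  by (cases "x = 0"; cases "y = 0"; cases "x + y = 0"; auto)

lemma padic_val_ge_diff: "padic_val_ge p x k \<Longrightarrow> padic_val_ge p y k \<Longrightarrow> padic_val_ge p (x - y) k"
  using padic_val_ge_add[of x k "- y"] by simp

lemma padic_val_ge_mult:
  "padic_val_ge p x k \<Longrightarrow> padic_val_ge p y j \<Longrightarrow> padic_val_ge p (x * y) (k + j)"
  using padic_val_mult[of x y] unfolding padic_val_ge_def by (cases "x = 0"; cases "y = 0"; auto)

lemma padic_val_eq_near:
  assumes "x \<noteq> 0" "padic_val_ge p (y - x) (padic_val p x + 1)"
  shows "y \<noteq> 0 \<and> padic_val p y = padic_val p x"
proof (cases "y - x = 0")
  case False
  with assms have "padic_val p x < padic_val p (y - x)" by (simp add: padic_val_ge_def)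
  from padic_val_add_strict[OF assms(1) False this] show ?thesis by simp
qed (use assms in simp)

lemma padic_val_ge_half: "padic_val_ge p x m \<Longrightarrow> padic_val_ge p (x / 2) (m - padic_val p 2)"
  by (cases "x = 0") (simp_all add: padic_val_ge_def padic_val_divide)

lemma padic_val_ge_inverse_diff:
  assumes "a \<noteq> 0" "b \<noteq> 0" "padic_val p a = K" "padic_val p b = K"
    and "padic_val_ge p (a - b) (k + 2 * K)"
  shows "padic_val_ge p (inverse a - inverse b) k"
proof -
  have "padic_val_ge p (inverse a * inverse b) (- 2 * K)"
    using padic_val_mult[of "inverse a" "inverse b"] padic_val_inverse assms(1-4)
    unfolding padic_val_ge_def by simp
  moreover have "padic_val_ge p (b - a) (k + 2 * K)"
    using assms(5) padic_val_ge_diff_commute by simp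
  ultimately have "padic_val_ge p ((b - a) * (inverse a * inverse b)) ((k + 2 * K) + (- 2 * K))"
    using padic_val_ge_mult by blast
  moreover have "inverse a - inverse b = (b - a) * (inverse a * inverse b)"
    using assms(1,2) by (simp add: field_simps)
  ultimately show ?thesis by simp
qed

end

section \<open>SD-maps on fields containing the rationals\<close>

lemma (in abelian_group) minus_eq_zero_iff:
  "x \<in> carrier G \<Longrightarrow> y \<in> carrier G \<Longrightarrow> x \<ominus> y = \<zero> \<longleftrightarrow> x = y"
  by (metis a_minus_def add.inv_closed add.inv_equality add.inv_inv add.r_inv)

lemma (in ring) a_inv_nonzero: "x \<in> carrier R \<Longrightarrow> x \<noteq> \<zero> \<Longrightarrow> \<ominus> x \<noteq> \<zero>"
  by (metis add.inv_inv minus_zero)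

lemma (in field) nonzero_inv:
  assumes "x \<in> carrier R" "x \<noteq> \<zero>"
  shows "inv x \<in> carrier R" "x \<otimes> inv x = \<one>" "inv x \<otimes> x = \<one>" "inv x \<noteq> \<zero>"
proof -
  have x: "x \<in> Units R" using field_Units assms by simp
  then show "inv x \<in> carrier R" "x \<otimes> inv x = \<one>" "inv x \<otimes> x = \<one>" by auto
  show "inv x \<noteq> \<zero>"
    using x by (metis Units_l_inv assms(1) l_null zero_not_one)
qed

lemma (in field) frac_eq_iff:
  assumes "u \<in> carrier R" "v \<in> carrier R" "w \<in> carrier R" "z \<in> carrier R" "v \<noteq> \<zero>" "z \<noteq> \<zero>"
  shows "u \<otimes> inv v = w \<otimes> inv z \<longleftrightarrow> u \<otimes> z = w \<otimes> v"
proof -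
  note v = nonzero_inv[OF assms(2,5)] and z = nonzero_inv[OF assms(4,6)]
  have "u \<otimes> inv v = w \<otimes> inv z \<longleftrightarrow> (u \<otimes> inv v) \<otimes> (v \<otimes> z) = (w \<otimes> inv z) \<otimes> (v \<otimes> z)"
    using m_rcancel[of "v \<otimes> z"] integral_iff assms v z by simp
  also have "(u \<otimes> inv v) \<otimes> (v \<otimes> z) = u \<otimes> z \<otimes> (inv v \<otimes> v)"
    using assms(1-4) v(1) by algebra
  also have "(w \<otimes> inv z) \<otimes> (v \<otimes> z) = w \<otimes> v \<otimes> (inv z \<otimes> z)"
    using assms(1-4) z(1) by algebra
  finally show ?thesis using v(3) z(3) assms by simp
qed

locale rat_field = field R for R :: "'a ring" (structure) +
  fixes rat_emb :: "rat \<Rightarrow> 'a"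
  assumes rat_emb_closed [simp]: "rat_emb q \<in> carrier R"
    and rat_emb_add: "rat_emb (a + b) = rat_emb a \<oplus> rat_emb b"
    and rat_emb_mult: "rat_emb (a * b) = rat_emb a \<otimes> rat_emb b"
    and rat_emb_one: "rat_emb 1 = \<one>"
begin

lemma rat_emb_zero [simp]: "rat_emb 0 = \<zero>"
  using rat_emb_add[of 0 0] r_neg[of "rat_emb 0"] by (simp add: a_minus_def[symmetric])

lemma rat_emb_minus: "rat_emb (- a) = \<ominus> rat_emb a"
  using rat_emb_add[of "- a" a] minus_equality[of "rat_emb (- a)" "rat_emb a"] by simp

lemma rat_emb_diff: "rat_emb (a - b) = rat_emb a \<ominus> rat_emb b"
  using rat_emb_add[of a "- b"] rat_emb_minus[of b] by (simp add: minus_eq)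

lemma rat_emb_nonzero: "q \<noteq> 0 \<Longrightarrow> rat_emb q \<noteq> \<zero>"
  using rat_emb_mult[of q "inverse q"] rat_emb_one by force

lemma rat_emb_eq_iff: "rat_emb a = rat_emb b \<longleftrightarrow> a = b"
  using rat_emb_nonzero[of "a - b"] rat_emb_diff[of a b] minus_eq_zero_iff by auto

lemma rat_emb_inverse: "q \<noteq> 0 \<Longrightarrow> rat_emb (inverse q) = inv (rat_emb q)"
  using rat_emb_mult[of q "inverse q"] rat_emb_one
    comm_inv_char[of "rat_emb q" "rat_emb (inverse q)"]
  by simp

lemma rat_emb_divide: "b \<noteq> 0 \<Longrightarrow> rat_emb (a / b) = rat_emb a \<otimes> inv (rat_emb b)"
  using rat_emb_mult[of a "inverse b"] rat_emb_inverse by (simp add: divide_inverse)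

lemma rat_emb_two: "\<one> \<oplus> \<one> = rat_emb 2"
  using rat_emb_add[of 1 1] rat_emb_one by simp

lemma two_nonzero: "\<one> \<oplus> \<one> \<noteq> \<zero>"
  using rat_emb_two rat_emb_nonzero by simp

lemma mobius_frac_eq_iff:
  assumes "a \<in> carrier R" "b \<in> carrier R" "c \<in> carrier R" "d \<in> carrier R" "a \<noteq> b" "c \<noteq> d"
  shows "(a \<oplus> b) \<otimes> inv (a \<ominus> b) = (c \<oplus> d) \<otimes> inv (c \<ominus> d) \<longleftrightarrow> a \<otimes> d = c \<otimes> b"
proof -
  have "(a \<oplus> b) \<otimes> inv (a \<ominus> b) = (c \<oplus> d) \<otimes> inv (c \<ominus> d) \<longleftrightarrow>
      (a \<oplus> b) \<otimes> (c \<ominus> d) \<ominus> (c \<oplus> d) \<otimes> (a \<ominus> b) = \<zero>"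
    using frac_eq_iff minus_eq_zero_iff assms by simp
  also have "(a \<oplus> b) \<otimes> (c \<ominus> d) \<ominus> (c \<oplus> d) \<otimes> (a \<ominus> b) = (\<one> \<oplus> \<one>) \<otimes> (c \<otimes> b \<ominus> a \<otimes> d)"
    using assms by algebra
  also have "\<dots> = \<zero> \<longleftrightarrow> a \<otimes> d = c \<otimes> b"
    using integral_iff two_nonzero minus_eq_zero_iff assms by auto
  finally show ?thesis .
qed

text \<open>The relations given by \<open>f_sum_diff\<close> at \<open>(2, 1)\<close>, \<open>(4, 1)\<close> and \<open>(3, 2)\<close> for
  \<open>a = f 2\<close>, \<open>b = f 3\<close>, \<open>c = f 5\<close>.\<close>

lemma two_from_sd_relations:
  assumes carrier: "a \<in> carrier R" "b \<in> carrier R" "c \<in> carrier R"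
    and nonzero: "a \<noteq> \<zero>" "c \<noteq> \<zero>" "a \<oplus> \<one> \<noteq> \<zero>"
    and H1: "b \<otimes> (a \<ominus> \<one>) = a \<oplus> \<one>"
    and H2: "c \<otimes> (a \<otimes> a \<ominus> \<one>) = (a \<otimes> a \<oplus> \<one>) \<otimes> b"
    and H3: "c \<otimes> (b \<ominus> a) = b \<oplus> a"
  shows "a = \<one> \<oplus> \<one>"
proof -
  have "(c \<otimes> (a \<ominus> \<one>) \<otimes> (a \<ominus> \<one>)) \<otimes> (a \<oplus> \<one>) = (c \<otimes> (a \<otimes> a \<ominus> \<one>)) \<otimes> (a \<ominus> \<one>)"
    using carrier by algebra
  also have "\<dots> = (a \<otimes> a \<oplus> \<one>) \<otimes> (b \<otimes> (a \<ominus> \<one>))"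
    using H2 carrier by algebra
  also have "\<dots> = (a \<otimes> a \<oplus> \<one>) \<otimes> (a \<oplus> \<one>)"
    using H1 by simp
  finally have "c \<otimes> (a \<ominus> \<one>) \<otimes> (a \<ominus> \<one>) = a \<otimes> a \<oplus> \<one>"
    using m_rcancel[OF nonzero(3)] carrier by simp
  then have square: "c \<otimes> ((a \<ominus> \<one>) \<otimes> (a \<ominus> \<one>)) = a \<otimes> a \<oplus> \<one>"
    using carrier by (simp add: m_assoc)
  have "c \<otimes> ((a \<oplus> \<one>) \<ominus> a \<otimes> (a \<ominus> \<one>)) = c \<otimes> (b \<otimes> (a \<ominus> \<one>) \<ominus> a \<otimes> (a \<ominus> \<one>))"
    using H1 by simp
  also have "\<dots> = c \<otimes> (b \<ominus> a) \<otimes> (a \<ominus> \<one>)"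
    using carrier by algebra
  also have "\<dots> = b \<otimes> (a \<ominus> \<one>) \<oplus> a \<otimes> (a \<ominus> \<one>)"
    using H3 carrier by algebra
  also have "\<dots> = a \<otimes> a \<oplus> \<one>"
    using H1 carrier by algebra
  also have "\<dots> = c \<otimes> ((a \<ominus> \<one>) \<otimes> (a \<ominus> \<one>))"
    using square by simp
  finally have "(a \<oplus> \<one>) \<ominus> a \<otimes> (a \<ominus> \<one>) = (a \<ominus> \<one>) \<otimes> (a \<ominus> \<one>)"
    using m_lcancel[OF nonzero(2)] carrier by simp
  then have "(a \<oplus> \<one>) \<ominus> a \<otimes> (a \<ominus> \<one>) \<ominus> (a \<ominus> \<one>) \<otimes> (a \<ominus> \<one>) = \<zero>"
    using minus_eq_zero_iff carrier by simp
  moreover have "(a \<oplus> \<one>) \<ominus> a \<otimes> (a \<ominus> \<one>) \<ominus> (a \<ominus> \<one>) \<otimes> (a \<ominus> \<one>) =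
      (\<one> \<oplus> \<one>) \<otimes> a \<otimes> ((\<one> \<oplus> \<one>) \<ominus> a)"
    using carrier by algebra
  ultimately have "(\<one> \<oplus> \<one>) \<ominus> a = \<zero>"
    using integral_iff two_nonzero nonzero carrier by simp
  then show ?thesis using minus_eq_zero_iff carrier by simp
qed

end

locale sd_map = rat_field +
  fixes f :: "'a \<Rightarrow> 'a"
  assumes f_closed [simp]: "x \<in> carrier R \<Longrightarrow> f x \<in> carrier R"
    and f_inj: "\<lbrakk>x \<in> carrier R; y \<in> carrier R; x \<noteq> y\<rbrakk> \<Longrightarrow> f x \<noteq> f y"
    and f_sd: "\<lbrakk>x \<in> carrier R; y \<in> carrier R; x \<noteq> y\<rbrakk> \<Longrightarrow>
      f ((x \<oplus> y) \<otimes> inv (x \<ominus> y)) = (f x \<oplus> f y) \<otimes> inv (f x \<ominus> f y)"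
begin

lemma sd_frac_zero_right: "x \<in> carrier R \<Longrightarrow> x \<noteq> \<zero> \<Longrightarrow> (x \<oplus> \<zero>) \<otimes> inv (x \<ominus> \<zero>) = \<one>"
  using nonzero_inv by (simp add: minus_eq)

text \<open>\<open>f 1 = (f x + f 0) / (f x - f 0)\<close> for all \<open>x \<noteq> 0\<close>, so \<open>f 0 \<noteq> 0\<close> would make the
  Moebius transformation \<open>t \<mapsto> (t + f 0) / (t - f 0)\<close> take the same value at \<open>f 1 \<noteq> f 2\<close>.\<close>

lemma f_zero [simp]: "f \<zero> = \<zero>"
proof (rule ccontr)
  assume f0: "f \<zero> \<noteq> \<zero>"
  have f1: "f \<one> = (f x \<oplus> f \<zero>) \<otimes> inv (f x \<ominus> f \<zero>)" if "x \<in> carrier R" "x \<noteq> \<zero>" for x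
    using f_sd[of x \<zero>] sd_frac_zero_right that by simp
  have "rat_emb 2 \<noteq> \<one>" using rat_emb_eq_iff[of 2 1] rat_emb_one by simp
  moreover have "(f \<one> \<oplus> f \<zero>) \<otimes> inv (f \<one> \<ominus> f \<zero>) = (f (rat_emb 2) \<oplus> f \<zero>) \<otimes> inv (f (rat_emb 2) \<ominus> f \<zero>)"
    using f1[of \<one>] f1[of "rat_emb 2"] rat_emb_nonzero[of 2] by simp
  ultimately have "f \<one> \<otimes> f \<zero> = f (rat_emb 2) \<otimes> f \<zero>"
    using mobius_frac_eq_iff[of "f \<one>" "f \<zero>" "f (rat_emb 2)" "f \<zero>"] f_inj rat_emb_nonzero[of 2]
    by simp
  then have "f \<one> = f (rat_emb 2)" using m_rcancel[OF f0] by simp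
  with \<open>rat_emb 2 \<noteq> \<one>\<close> show False using f_inj[of \<one> "rat_emb 2"] by auto
qed

lemma f_nonzero: "x \<in> carrier R \<Longrightarrow> x \<noteq> \<zero> \<Longrightarrow> f x \<noteq> \<zero>"
  using f_inj[of x \<zero>] by simp

lemma f_one [simp]: "f \<one> = \<one>"
  using f_sd[of \<one> \<zero>] sd_frac_zero_right[of \<one>] sd_frac_zero_right[of "f \<one>"] f_nonzero[of \<one>] by simp

lemma f_a_inv: assumes "x \<in> carrier R" shows "f (\<ominus> x) = \<ominus> f x"
proof (cases "x = \<zero>")
  case False
  have "x \<noteq> \<ominus> x"
  proof
    assume "x = \<ominus> x"
    then have "x \<oplus> x = x \<oplus> \<ominus> x" by (rule arg_cong)
    then have "(\<one> \<oplus> \<one>) \<otimes> x = \<zero>" using assms by (simp add: l_distr r_neg)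
    then show False using integral_iff two_nonzero False assms by simp
  qed
  then have "x \<ominus> \<ominus> x \<noteq> \<zero>" "f x \<ominus> f (\<ominus> x) \<noteq> \<zero>"
    using f_inj[of x "\<ominus> x"] minus_eq_zero_iff assms by simp_all
  then have "(f x \<oplus> f (\<ominus> x)) \<otimes> inv (f x \<ominus> f (\<ominus> x)) = \<zero>"
    using f_sd[of x "\<ominus> x"] \<open>x \<noteq> \<ominus> x\<close> assms nonzero_inv by (simp add: r_neg)
  then have "f x \<oplus> f (\<ominus> x) = \<zero>"
    using integral_iff[of "f x \<oplus> f (\<ominus> x)" "inv (f x \<ominus> f (\<ominus> x))"] nonzero_inv
      \<open>f x \<ominus> f (\<ominus> x) \<noteq> \<zero>\<close> assms
    by simp
  then have "f (\<ominus> x) \<oplus> f x = \<zero>" using assms by (simp add: add.m_comm)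
  then show ?thesis by (rule minus_equality[symmetric]) (use assms in simp_all)
qed simp

text \<open>For \<open>t = x / y\<close> the quotients \<open>(x + y) / (x - y)\<close> and \<open>(t + 1) / (t - 1)\<close> agree, and
  \<open>f\<close> transports this equality.\<close>

lemma f_divide_mult:
  assumes "x \<in> carrier R" "y \<in> carrier R" "y \<noteq> \<zero>"
  shows "f (x \<otimes> inv y) \<otimes> f y = f x"
proof (cases "x = y")
  case True
  then show ?thesis using nonzero_inv assms by simp
next
  case False
  define t where "t = x \<otimes> inv y"
  have t: "t \<in> carrier R" "t \<otimes> y = x"
    unfolding t_def using nonzero_inv assms by (simp_all add: m_assoc)
  with False assms have "t \<noteq> \<one>" by auto
  have "(x \<oplus> y) \<otimes> inv (x \<ominus> y) = (t \<oplus> \<one>) \<otimes> inv (t \<ominus> \<one>)"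
    using mobius_frac_eq_iff[of x y t \<one>] assms t \<open>t \<noteq> \<one>\<close> False by simp
  then have "(f x \<oplus> f y) \<otimes> inv (f x \<ominus> f y) = (f t \<oplus> f \<one>) \<otimes> inv (f t \<ominus> f \<one>)"
    using f_sd[of x y] f_sd[of t \<one>] assms t \<open>t \<noteq> \<one>\<close> False by simp
  then have "f x \<otimes> f \<one> = f t \<otimes> f y"
    using mobius_frac_eq_iff[of "f x" "f y" "f t" "f \<one>"] f_inj[of x y] f_inj[of t \<one>]
      assms t \<open>t \<noteq> \<one>\<close> False
    by simp
  then show ?thesis using assms t_def by simp
qed

lemma f_mult:
  assumes "a \<in> carrier R" "b \<in> carrier R"
  shows "f (a \<otimes> b) = f a \<otimes> f b"
proof (cases "b = \<zero>")
  case False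
  then have "a \<otimes> b \<otimes> inv b = a" using assms nonzero_inv by (simp add: m_assoc)
  then show ?thesis using f_divide_mult[of "a \<otimes> b" b] False assms by simp
qed (use assms in simp)

lemma f_inv: "y \<in> carrier R \<Longrightarrow> y \<noteq> \<zero> \<Longrightarrow> f (inv y) = inv (f y)"
  using f_divide_mult[of \<one> y] comm_inv_char[of "f y" "f (inv y)"] nonzero_inv[of y]
  by (simp add: m_comm)

lemma f_sum_diff:
  assumes "x \<in> carrier R" "y \<in> carrier R" "x \<noteq> y"
  shows "f (x \<oplus> y) \<otimes> (f x \<ominus> f y) = (f x \<oplus> f y) \<otimes> f (x \<ominus> y)"
proof -
  have "x \<ominus> y \<noteq> \<zero>" using minus_eq_zero_iff assms by simp
  then have "f ((x \<oplus> y) \<otimes> inv (x \<ominus> y)) = f (x \<oplus> y) \<otimes> inv (f (x \<ominus> y))"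
    using f_mult f_inv nonzero_inv assms by simp
  then have "f (x \<oplus> y) \<otimes> inv (f (x \<ominus> y)) = (f x \<oplus> f y) \<otimes> inv (f x \<ominus> f y)"
    using f_sd assms by simp
  then show ?thesis
    using frac_eq_iff[of "f (x \<oplus> y)" "f (x \<ominus> y)" "f x \<oplus> f y" "f x \<ominus> f y"]
      f_nonzero \<open>x \<ominus> y \<noteq> \<zero>\<close> minus_eq_zero_iff f_inj assms
    by simp
qed

lemma f_two: "f (rat_emb 2) = rat_emb 2"
proof -
  define a b c where "a = f (rat_emb 2)" and "b = f (rat_emb 3)" and "c = f (rat_emb 5)"
  have carrier: "a \<in> carrier R" "b \<in> carrier R" "c \<in> carrier R" unfolding a_def b_def c_def
    by simp_all
  have emb: "rat_emb 2 \<oplus> \<one> = rat_emb 3" "rat_emb 2 \<ominus> \<one> = \<one>" "rat_emb 4 \<oplus> \<one> = rat_emb 5"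
    "rat_emb 4 \<ominus> \<one> = rat_emb 3" "rat_emb 3 \<oplus> rat_emb 2 = rat_emb 5" "rat_emb 3 \<ominus> rat_emb 2 = \<one>"
    "rat_emb 4 = rat_emb 2 \<otimes> rat_emb 2"
    using rat_emb_add[of 2 1] rat_emb_diff[of 2 1] rat_emb_add[of 4 1] rat_emb_diff[of 4 1]
      rat_emb_add[of 3 2] rat_emb_diff[of 3 2] rat_emb_mult[of 2 2] rat_emb_one
    by simp_all
  have ne: "rat_emb 2 \<noteq> \<one>" "rat_emb 4 \<noteq> \<one>" "rat_emb 3 \<noteq> rat_emb 2" "rat_emb 2 \<noteq> rat_emb (- 1)"
    using rat_emb_eq_iff[of 2 1] rat_emb_eq_iff[of 4 1] rat_emb_eq_iff[of 3 2]
      rat_emb_eq_iff[of 2 "- 1"]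
      rat_emb_one
    by simp_all
  have "a = \<one> \<oplus> \<one>"
  proof (rule two_from_sd_relations[OF carrier])
    show "a \<noteq> \<zero>" "c \<noteq> \<zero>" unfolding a_def c_def using f_nonzero rat_emb_nonzero by simp_all
    show "a \<oplus> \<one> \<noteq> \<zero>"
    proof
      assume "a \<oplus> \<one> = \<zero>"
      then have "\<ominus> \<one> = a" using minus_equality[of a \<one>] carrier by simp
      then have "f (rat_emb (- 1)) = f (rat_emb 2)"
        unfolding a_def using f_a_inv[of \<one>] rat_emb_minus[of 1] rat_emb_one by simp
      with ne(4) show False using f_inj by auto
    qed
    show "b \<otimes> (a \<ominus> \<one>) = a \<oplus> \<one>"
      using f_sum_diff[of "rat_emb 2" \<one>] emb ne carrier unfolding a_def b_def by simp
    show "c \<otimes> (a \<otimes> a \<ominus> \<one>) = (a \<otimes> a \<oplus> \<one>) \<otimes> b"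
      using f_sum_diff[of "rat_emb 4" \<one>] emb ne f_mult[of "rat_emb 2" "rat_emb 2"]
      unfolding a_def b_def c_def by simp
    show "c \<otimes> (b \<ominus> a) = b \<oplus> a"
      using f_sum_diff[of "rat_emb 3" "rat_emb 2"] emb ne carrier unfolding a_def b_def c_def
        by simp
  qed
  then show ?thesis unfolding a_def rat_emb_two .
qed

lemma f_of_nat: "f (rat_emb (of_nat n)) = rat_emb (of_nat n)"
proof (induction n rule: induct_nat_012)
  case (ge2 n)
  show ?case
  proof (cases "n = 0")
    case True
    then show ?thesis using f_two by (simp add: numeral_2_eq_2)
  next
    case False
    define t where "t = rat_emb (of_nat (Suc n))"
    have t: "t \<in> carrier R" "t \<noteq> \<one>" "f t = t"
      unfolding t_def using ge2.IH(2) rat_emb_eq_iff[of _ 1] rat_emb_one False by auto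
    have "t \<ominus> \<one> = rat_emb (of_nat n)" "t \<oplus> \<one> = rat_emb (of_nat (Suc (Suc n)))"
      unfolding t_def using rat_emb_diff[of "of_nat (Suc n)" 1, symmetric]
        rat_emb_add[of "of_nat (Suc n)" 1, symmetric] rat_emb_one
      by (simp_all add: add.commute)
    with ge2.IH(1) t have "f (t \<oplus> \<one>) \<otimes> (t \<ominus> \<one>) = (t \<oplus> \<one>) \<otimes> (t \<ominus> \<one>)"
      using f_sum_diff[of t \<one>] by simp
    then have "f (t \<oplus> \<one>) = t \<oplus> \<one>"
      using m_rcancel[of "t \<ominus> \<one>"] minus_eq_zero_iff[of t \<one>] t by simp
    then show ?thesis using \<open>t \<oplus> \<one> = _\<close> by simp
  qed
qed (simp_all add: rat_emb_one)

lemma f_of_int: "f (rat_emb (of_int k)) = rat_emb (of_int k)"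
proof (cases "k \<ge> 0")
  case True
  then show ?thesis using f_of_nat[of "nat k"] by simp
next
  case False
  then have "rat_emb (of_int k) = \<ominus> rat_emb (of_nat (nat (- k)))"
    using rat_emb_minus[of "of_nat (nat (- k))"] by simp
  then show ?thesis using f_a_inv f_of_nat by simp
qed

lemma f_rat_emb: "f (rat_emb q) = rat_emb q"
proof -
  obtain a b :: int where q: "q = of_int a / of_int b" "b \<noteq> 0" using rat_int_fraction by metis
  then have "rat_emb q = rat_emb (of_int a) \<otimes> inv (rat_emb (of_int b))"
    using rat_emb_divide by simp
  with q show ?thesis
    using f_mult f_inv f_of_int nonzero_inv rat_emb_nonzero[of "of_int b"] by simp
qed

text \<open>With \<open>t = 1 + 2 / s\<close> one has \<open>t + 1 = (2 / s) (1 + s)\<close> and \<open>t - 1 = 2 / s\<close>, so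
  \<open>f_sum_diff\<close> for \<open>t\<close> and \<open>1\<close> links \<open>f (1 + s)\<close> to \<open>f t\<close>.\<close>

lemma f_near_one_identity:
  assumes "s \<in> carrier R" "s \<noteq> \<zero>"
  defines "t \<equiv> \<one> \<oplus> (\<one> \<oplus> \<one>) \<otimes> inv s"
  shows "(f (\<one> \<oplus> s) \<ominus> \<one>) \<otimes> (f t \<ominus> \<one>) = \<one> \<oplus> \<one>"
proof -
  define u where "u = (\<one> \<oplus> \<one>) \<otimes> inv s"
  have u: "u \<in> carrier R" "u \<noteq> \<zero>" "u \<otimes> s = \<one> \<oplus> \<one>"
    unfolding u_def using assms(1,2) nonzero_inv integral_iff two_nonzero by (simp_all add: m_assoc)
  have t: "t \<in> carrier R" "t \<ominus> \<one> = u"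
    unfolding t_def u_def[symmetric] using u by (simp, algebra)
  have "t \<oplus> \<one> = u \<oplus> (\<one> \<oplus> \<one>)"
    unfolding t_def u_def[symmetric] using u by algebra
  also have "\<dots> = u \<otimes> (\<one> \<oplus> s)"
    using u assms(1) by (simp add: r_distr)
  finally have t_plus: "t \<oplus> \<one> = u \<otimes> (\<one> \<oplus> s)" .
  have "t \<noteq> \<one>" using t u(2) minus_eq_zero_iff by auto
  define g where "g = f (\<one> \<oplus> s)"
  have g: "g \<in> carrier R" unfolding g_def using assms(1) by simp
  have "f u \<otimes> (g \<otimes> (f t \<ominus> \<one>)) = f u \<otimes> (f t \<oplus> \<one>)"
    using f_sum_diff[of t \<one>] t t_plus \<open>t \<noteq> \<one>\<close> f_mult[of u "\<one> \<oplus> s"] u g assms(1)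
    unfolding g_def by (simp add: m_assoc m_comm[of "f t \<oplus> \<one>"])
  then have "g \<otimes> (f t \<ominus> \<one>) = f t \<oplus> \<one>"
    using m_lcancel[of "f u"] f_nonzero u g t by simp
  then have "(g \<ominus> \<one>) \<otimes> (f t \<ominus> \<one>) = (f t \<oplus> \<one>) \<ominus> (f t \<ominus> \<one>)"
    using g t by (simp add: l_minus a_minus_def l_distr m_comm)
  also have "\<dots> = \<one> \<oplus> \<one>" using f_closed[OF t(1)] by algebra
  finally show ?thesis unfolding g_def .
qed

end

section \<open>Fields with a p-adic valuation in which the rationals are dense\<close>

text \<open>\<open>V\<close> is only meaningful on nonzero elements. \<open>principal_unit_square\<close> is Hensel's lemma
  for \<open>X\<^sup>2 - x\<close>.\<close>

locale padic_like_field = rat_field R rat_emb + prime_padic p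
  for R :: "'a ring" (structure) and rat_emb and p +
  fixes V :: "'a \<Rightarrow> int"
  assumes V_mult: "\<lbrakk>x \<in> carrier R; y \<in> carrier R; x \<noteq> \<zero>; y \<noteq> \<zero>\<rbrakk> \<Longrightarrow> V (x \<otimes> y) = V x + V y"
    and V_add: "\<lbrakk>x \<in> carrier R; y \<in> carrier R; x \<noteq> \<zero>; y \<noteq> \<zero>; x \<oplus> y \<noteq> \<zero>\<rbrakk> \<Longrightarrow>
      V (x \<oplus> y) \<ge> min (V x) (V y)"
    and V_rat_emb: "q \<noteq> 0 \<Longrightarrow> V (rat_emb q) = padic_val p q"
    and rat_dense: "x \<in> carrier R \<Longrightarrow> \<exists>q. x \<ominus> rat_emb q = \<zero> \<or> k \<le> V (x \<ominus> rat_emb q)"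
    and principal_unit_square: "\<lbrakk>x \<in> carrier R; x \<ominus> \<one> = \<zero> \<or> 2 * padic_val p 2 + 1 \<le> V (x \<ominus> \<one>)\<rbrakk> \<Longrightarrow>
      \<exists>z\<in>carrier R. z \<otimes> z = x"
begin

lemma V_one [simp]: "V \<one> = 0"
  using V_rat_emb[of 1] rat_emb_one by simp

lemma V_inv: "x \<in> carrier R \<Longrightarrow> x \<noteq> \<zero> \<Longrightarrow> V (inv x) = - V x"
  using V_mult[of x "inv x"] nonzero_inv[of x] by simp

lemma V_divide:
  "x \<in> carrier R \<Longrightarrow> y \<in> carrier R \<Longrightarrow> x \<noteq> \<zero> \<Longrightarrow> y \<noteq> \<zero> \<Longrightarrow> V (x \<otimes> inv y) = V x - V y"
  using V_mult[of x "inv y"] nonzero_inv[of y] V_inv by simp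

lemma V_a_inv: assumes "x \<in> carrier R" shows "V (\<ominus> x) = V x"
proof (cases "x = \<zero>")
  case False
  have "\<ominus> \<one> \<noteq> \<zero>" using a_inv_nonzero[of \<one>] by simp
  moreover have "(\<ominus> \<one>) \<otimes> (\<ominus> \<one>) = \<one>" by algebra
  ultimately have "V (\<ominus> \<one>) = 0" using V_mult[of "\<ominus> \<one>" "\<ominus> \<one>"] by simp
  moreover have "\<ominus> x = (\<ominus> \<one>) \<otimes> x" using assms by algebra
  ultimately show ?thesis using V_mult[of "\<ominus> \<one>" x] \<open>\<ominus> \<one> \<noteq> \<zero>\<close> False assms by simp
qed simp

lemma V_add_strict:
  assumes "x \<in> carrier R" "y \<in> carrier R" "x \<noteq> \<zero>" "y \<noteq> \<zero>" "V x < V y"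
  shows "x \<oplus> y \<noteq> \<zero>" "V (x \<oplus> y) = V x"
proof -
  show sum: "x \<oplus> y \<noteq> \<zero>"
  proof
    assume "x \<oplus> y = \<zero>"
    then have "y = \<ominus> x" using assms by (metis add.inv_equality add.m_comm)
    then show False using assms V_a_inv by simp
  qed
  have "x = (x \<oplus> y) \<oplus> (\<ominus> y)" using assms by algebra
  then have "V x \<ge> min (V (x \<oplus> y)) (V (\<ominus> y))"
    using V_add[of "x \<oplus> y" "\<ominus> y"] sum assms a_inv_nonzero by simp
  with V_add[OF assms(1-4) sum] assms V_a_inv show "V (x \<oplus> y) = V x" by fastforce
qed

lemma V_add_ge:
  assumes "x \<in> carrier R" "y \<in> carrier R" "x = \<zero> \<or> V x \<ge> k" "y = \<zero> \<or> V y \<ge> k"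
  shows "x \<oplus> y = \<zero> \<or> V (x \<oplus> y) \<ge> k"
  using assms V_add[of x y] by (cases "x = \<zero>"; cases "y = \<zero>"; force)

definition principal_unit :: "'a \<Rightarrow> bool" where
  "principal_unit y \<longleftrightarrow> y \<in> carrier R \<and> (y \<ominus> \<one> = \<zero> \<or> 2 * padic_val p 2 + 1 \<le> V (y \<ominus> \<one>))"

lemma principal_unit_V:
  assumes "principal_unit y"
  shows "y \<in> carrier R" "y \<noteq> \<zero>" "V y = 0"
proof -
  show y: "y \<in> carrier R" using assms principal_unit_def by simp
  have "y \<noteq> \<zero> \<and> V y = 0"
  proof (cases "y \<ominus> \<one> = \<zero>")
    case True
    then show ?thesis using minus_eq_zero_iff y by simp
  next
    case False
    with assms padic_val_two_nonneg have "V \<one> < V (y \<ominus> \<one>)" unfolding principal_unit_def by simp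
    moreover have "y = \<one> \<oplus> (y \<ominus> \<one>)" using y by algebra
    ultimately show ?thesis using V_add_strict[of \<one> "y \<ominus> \<one>"] False y by simp
  qed
  then show "y \<noteq> \<zero>" "V y = 0" by simp_all
qed

lemma principal_unit_sqrt:
  assumes "principal_unit y"
  obtains z where "z \<in> carrier R" "z \<noteq> \<zero>" "V z = 0" "z \<otimes> z = y"
proof -
  obtain z where z: "z \<in> carrier R" "z \<otimes> z = y"
    using principal_unit_square assms unfolding principal_unit_def by blast
  with principal_unit_V[OF assms] have "z \<noteq> \<zero>" by auto
  with z principal_unit_V[OF assms] have "V z = 0" using V_mult[of z z] by simp
  with z \<open>z \<noteq> \<zero>\<close> show ?thesis using that by blast
qed

lemma unit_decomposition:
  assumes "z \<in> carrier R" "z \<noteq> \<zero>" "V z = 0"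
  obtains q w where "q \<noteq> 0" "padic_val p q = 0" "principal_unit w" "z = rat_emb q \<otimes> w"
proof -
  obtain q where q: "z \<ominus> rat_emb q = \<zero> \<or> 2 * padic_val p 2 + 1 \<le> V (z \<ominus> rat_emb q)"
    using rat_dense assms(1) by blast
  define d where "d = z \<ominus> rat_emb q"
  have d: "d \<in> carrier R" "rat_emb q = z \<oplus> \<ominus> d" unfolding d_def using assms(1) rat_emb_closed[of q]
    by (simp, algebra)
  have "rat_emb q \<noteq> \<zero> \<and> V (rat_emb q) = 0"
  proof (cases "d = \<zero>")
    case True
    then show ?thesis using d assms by (simp add: r_neg)
  next
    case False
    with q d padic_val_two_nonneg assms have "V z < V (\<ominus> d)" unfolding d_def by (simp add: V_a_inv)
    then show ?thesis using V_add_strict[of z "\<ominus> d"] d assms a_inv_nonzero False by simp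
  qed
  moreover from this have "q \<noteq> 0" by auto
  ultimately have q0: "q \<noteq> 0" "padic_val p q = 0" "rat_emb q \<noteq> \<zero>"
    using V_rat_emb[of q] by simp_all
  define w where "w = z \<otimes> inv (rat_emb q)"
  note inv_q = nonzero_inv[OF rat_emb_closed q0(3)]
  have w: "w \<in> carrier R" "z = rat_emb q \<otimes> w"
    unfolding w_def using inv_q assms(1) by (simp_all add: m_lcomm[of "rat_emb q" z])
  have "w \<ominus> \<one> = d \<otimes> inv (rat_emb q)"
    unfolding w_def d_def using assms(1) inv_q by (simp add: l_minus a_minus_def l_distr)
  moreover have "V (d \<otimes> inv (rat_emb q)) = V d" if "d \<noteq> \<zero>"
    using V_divide[OF d(1) rat_emb_closed that q0(3)] V_rat_emb q0 by simp
  ultimately have "w \<ominus> \<one> = \<zero> \<or> 2 * padic_val p 2 + 1 \<le> V (w \<ominus> \<one>)"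
    using q d(1) inv_q unfolding d_def[symmetric] by (cases "d = \<zero>") auto
  with w have "principal_unit w" unfolding principal_unit_def by simp
  with q0 w show ?thesis using that by blast
qed

lemma rat_emb_near_one_decomposition:
  assumes "x \<in> carrier R" "x \<noteq> \<zero>" "M > 0"
  obtains q where "x = rat_emb q"
  | q s where "V (rat_emb q) = V x" "rat_emb q \<noteq> \<zero>" "s \<in> carrier R" "s \<noteq> \<zero>" "V s \<ge> M"
      "x = rat_emb q \<otimes> (\<one> \<oplus> s)"
proof -
  obtain q where q: "x \<ominus> rat_emb q = \<zero> \<or> V x + M \<le> V (x \<ominus> rat_emb q)"
    using rat_dense assms(1) by blast
  define d where "d = x \<ominus> rat_emb q"
  define r where "r = rat_emb q"
  have d: "d \<in> carrier R" "r \<in> carrier R" "r = x \<oplus> \<ominus> d"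
    unfolding d_def r_def using assms(1) rat_emb_closed[of q] by (simp, simp, algebra)
  show ?thesis
  proof (cases "d = \<zero>")
    case True
    then show ?thesis using that(1) minus_eq_zero_iff assms(1) unfolding d_def by simp
  next
    case False
    with q assms have "V x < V (\<ominus> d)" unfolding d_def by (simp add: V_a_inv)
    then have r: "r \<noteq> \<zero>" "V r = V x"
      using V_add_strict[of x "\<ominus> d"] d assms a_inv_nonzero False by simp_all
    define s where "s = d \<otimes> inv r"
    note inv_r = nonzero_inv[OF d(2) r(1)]
    have s: "s \<in> carrier R" "s \<noteq> \<zero>" "V s = V d - V x"
      unfolding s_def using d inv_r False r integral_iff V_divide by simp_all
    have "r \<otimes> (\<one> \<oplus> s) = r \<oplus> d \<otimes> (r \<otimes> inv r)"
      unfolding s_def using d inv_r by algebra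
    also have "\<dots> = r \<oplus> d" using d inv_r by simp
    also have "\<dots> = x" unfolding d(3) using d(1) assms(1) by algebra
    finally have "x = r \<otimes> (\<one> \<oplus> s)" ..
    moreover have "V s \<ge> M" using s(3) q False unfolding d_def by simp
    ultimately show ?thesis using that(2)[of q s] r s unfolding r_def by blast
  qed
qed

end

section \<open>SD-maps preserve the valuation\<close>

lemma pow2_dvd_all_imp_zero:
  fixes n :: int
  assumes "\<And>k. 2 ^ k dvd n"
  shows "n = 0"
proof (rule ccontr)
  assume "n \<noteq> 0"
  then have "\<bar>2 ^ nat \<bar>n\<bar>\<bar> \<le> \<bar>n\<bar>" using assms dvd_imp_le_int by blast
  moreover have "int (nat \<bar>n\<bar>) < 2 ^ nat \<bar>n\<bar>"
    using less_exp[of "nat \<bar>n\<bar>"] by (metis of_nat_less_iff of_nat_numeral of_nat_power)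
  ultimately show False by simp
qed

locale padic_sd_map = padic_like_field R rat_emb p V + sd_map R rat_emb f
  for R :: "'a ring" (structure) and rat_emb p V f
begin

lemma V_f_rat_unit_mult:
  assumes "q \<noteq> 0" "padic_val p q = 0" "w \<in> carrier R" "w \<noteq> \<zero>"
  shows "V (f (rat_emb q \<otimes> w)) = V (f w)"
  using f_mult[of "rat_emb q" w] f_rat_emb V_mult[of "rat_emb q" "f w"] rat_emb_nonzero
    f_nonzero V_rat_emb assms
  by simp

text \<open>A principal unit \<open>y\<close> is the square of a unit \<open>z = q w\<close> with \<open>q\<close> a rational unit and
  \<open>w\<close> a principal unit, so \<open>V (f y) = 2 V (f w)\<close>.\<close>

lemma V_f_principal_unit_dvd: "principal_unit y \<Longrightarrow> 2 ^ k dvd V (f y)"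
proof (induction k arbitrary: y)
  case (Suc k)
  obtain z where z: "z \<in> carrier R" "z \<noteq> \<zero>" "V z = 0" "z \<otimes> z = y"
    using principal_unit_sqrt[OF Suc.prems] .
  obtain q w where qw: "q \<noteq> 0" "padic_val p q = 0" "principal_unit w" "z = rat_emb q \<otimes> w"
    using unit_decomposition[OF z(1-3)] .
  have "V (f z) = V (f w)"
    using V_f_rat_unit_mult qw principal_unit_V[OF qw(3)] by simp
  moreover have "f y = f z \<otimes> f z" using z f_mult by auto
  ultimately have "V (f y) = 2 * V (f w)" using V_mult[of "f z" "f z"] f_nonzero z by simp
  with Suc.IH[OF qw(3)] show ?case by simp
qed simp

lemma V_f_unit:
  assumes "z \<in> carrier R" "z \<noteq> \<zero>" "V z = 0"
  shows "V (f z) = 0"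
proof -
  obtain q w where qw: "q \<noteq> 0" "padic_val p q = 0" "principal_unit w" "z = rat_emb q \<otimes> w"
    using unit_decomposition[OF assms] .
  have "V (f w) = 0" using pow2_dvd_all_imp_zero V_f_principal_unit_dvd[OF qw(3)] by blast
  with qw show ?thesis using V_f_rat_unit_mult principal_unit_V[OF qw(3)] by simp
qed

lemma V_f:
  assumes "x \<in> carrier R" "x \<noteq> \<zero>"
  shows "V (f x) = V x"
proof -
  define r where "r = rat_emb (of_nat p powi V x)"
  have r: "r \<in> carrier R" "r \<noteq> \<zero>" "V r = V x" "f r = r"
    unfolding r_def using rat_emb_nonzero V_rat_emb padic_val_power_int_p f_rat_emb
      prime_gt_0_nat[OF prime_p]
    by auto
  define z where "z = x \<otimes> inv r"
  have z: "z \<in> carrier R" "z \<noteq> \<zero>" "V z = 0" "x = z \<otimes> r"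
    unfolding z_def using assms r nonzero_inv[of r] integral_iff V_divide by (simp_all add: m_assoc)
  then have "V (f x) = V (f z) + V r" using r f_mult V_mult f_nonzero by simp
  then show ?thesis using V_f_unit z r by simp
qed

lemma V_f_near_one:
  assumes s: "s \<in> carrier R" "s \<noteq> \<zero>" "V s > padic_val p 2"
  shows "f (\<one> \<oplus> s) \<ominus> \<one> \<noteq> \<zero>" "V (f (\<one> \<oplus> s) \<ominus> \<one>) = V s"
proof -
  define u where "u = (\<one> \<oplus> \<one>) \<otimes> inv s"
  define t where "t = \<one> \<oplus> u"
  have two: "V (\<one> \<oplus> \<one>) = padic_val p 2" using rat_emb_two V_rat_emb by simp
  have u: "u \<in> carrier R" "u \<noteq> \<zero>" "V u = padic_val p 2 - V s"
    unfolding u_def using s nonzero_inv[of s] integral_iff two_nonzero V_divide two by simp_all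
  then have "V u < V \<one>" using s by simp
  then have t: "t \<in> carrier R" "t \<noteq> \<zero>" "V t = V u"
    using V_add_strict[of u \<one>] u unfolding t_def by (simp_all add: add.m_comm)
  then have "V (f t) < V (\<ominus> \<one>)" using V_f u s V_a_inv by simp
  then have ft: "f t \<ominus> \<one> \<noteq> \<zero>" "V (f t \<ominus> \<one>) = V u"
    using V_add_strict[of "f t" "\<ominus> \<one>"] f_nonzero V_f t a_inv_nonzero by (simp_all add: minus_eq)
  have prod: "(f (\<one> \<oplus> s) \<ominus> \<one>) \<otimes> (f t \<ominus> \<one>) = \<one> \<oplus> \<one>"
    using f_near_one_identity[OF s(1,2)] unfolding t_def u_def .
  then show nonzero: "f (\<one> \<oplus> s) \<ominus> \<one> \<noteq> \<zero>" using two_nonzero t(1) by auto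
  from prod have "V (f (\<one> \<oplus> s) \<ominus> \<one>) + V (f t \<ominus> \<one>) = padic_val p 2"
    using V_mult[OF _ _ nonzero ft(1)] s(1) t(1) two by simp
  with ft u show "V (f (\<one> \<oplus> s) \<ominus> \<one>) = V s" by simp
qed

theorem f_id:
  assumes "x \<in> carrier R"
  shows "f x = x"
proof (rule ccontr)
  assume ne: "f x \<noteq> x"
  then have "x \<noteq> \<zero>" by auto
  define d where "d = f x \<ominus> x"
  have d: "d \<in> carrier R" "d \<noteq> \<zero>" unfolding d_def using assms ne minus_eq_zero_iff by simp_all
  define M where "M = max (padic_val p 2 + 1) (V d - V x + 1)"
  have "M > 0" unfolding M_def using padic_val_two_nonneg by simp
  show False
  proof (rule rat_emb_near_one_decomposition[OF assms \<open>x \<noteq> \<zero>\<close> \<open>M > 0\<close>])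
    fix q assume "x = rat_emb q"
    with ne f_rat_emb show False by simp
  next
    fix q s
    assume r: "V (rat_emb q) = V x" "rat_emb q \<noteq> \<zero>"
      and s: "s \<in> carrier R" "s \<noteq> \<zero>" "M \<le> V s" and x: "x = rat_emb q \<otimes> (\<one> \<oplus> s)"
    define e where "e = (f (\<one> \<oplus> s) \<ominus> \<one>) \<oplus> \<ominus> s"
    have "f x = rat_emb q \<otimes> f (\<one> \<oplus> s)" using x f_mult f_rat_emb s by simp
    then have "d = rat_emb q \<otimes> f (\<one> \<oplus> s) \<ominus> rat_emb q \<otimes> (\<one> \<oplus> s)"
      unfolding d_def using x by simp
    also have "\<dots> = rat_emb q \<otimes> e"
      unfolding e_def using s f_closed[of "\<one> \<oplus> s"] rat_emb_closed[of q] by algebra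
    finally have de: "d = rat_emb q \<otimes> e" .
    then have "e \<in> carrier R" "e \<noteq> \<zero>" unfolding e_def using d s by auto
    have "V s > padic_val p 2" using s M_def by simp
    then have "e = \<zero> \<or> V e \<ge> V s"
      using V_add_ge[of "f (\<one> \<oplus> s) \<ominus> \<one>" "\<ominus> s" "V s"] V_f_near_one s V_a_inv
      unfolding e_def by simp
    with \<open>e \<noteq> \<zero>\<close> have "V d \<ge> V x + V s"
      using de V_mult[of "rat_emb q" e] r \<open>e \<in> carrier R\<close> by simp
    then show False using s M_def by simp
  qed
qed

end

section \<open>Cauchy sequences for the p-adic valuation\<close>

lemma eventually_pair_sequentially:
  "eventually P sequentially \<Longrightarrow> \<forall>\<^sub>F (m, n) in sequentially \<times>\<^sub>F sequentially. P m \<and> P n"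
  unfolding eventually_prod_sequentially eventually_sequentially by auto

context prime_padic
begin

text \<open>\<open>padic_cauchy\<close> and \<open>padic_equiv\<close> restated with the integer valuation instead of
  the real absolute value \<open>p powr - padic_val p\<close>.\<close>

definition val_cauchy :: "(nat \<Rightarrow> rat) \<Rightarrow> bool" where
  "val_cauchy X \<longleftrightarrow>
     (\<forall>k. \<forall>\<^sub>F (m, n) in sequentially \<times>\<^sub>F sequentially. padic_val_ge p (X m - X n) k)"

definition val_equiv :: "(nat \<Rightarrow> rat) \<Rightarrow> (nat \<Rightarrow> rat) \<Rightarrow> bool" where
  "val_equiv X Y \<longleftrightarrow> (\<forall>k. \<forall>\<^sub>F n in sequentially. padic_val_ge p (X n - Y n) k)"

lemma p_gt_1: "real p > 1"
  using prime_gt_1_nat[OF prime_p] by simp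

lemma padic_abs_less_iff: "padic_abs p q < real p powr (- of_int k) \<longleftrightarrow> padic_val_ge p q (k + 1)"
proof (cases "q = 0")
  case True
  then show ?thesis using p_gt_1 by (simp add: padic_abs_def padic_val_ge_def)
next
  case False
  then have "padic_abs p q = real p powr (- of_int (padic_val p q))"
    unfolding padic_abs_def padic_val_def by (auto split: prod.splits)
  then have "padic_abs p q < real p powr (- of_int k) \<longleftrightarrow> k < padic_val p q"
    using powr_less_cancel_iff[OF p_gt_1] by simp
  then show ?thesis using False by (auto simp: padic_val_ge_def)
qed

lemma padic_abs_eventually_small_iff:
  "(\<forall>e>0. \<forall>\<^sub>F i in F. padic_abs p (g i) < e) \<longleftrightarrow> (\<forall>k. \<forall>\<^sub>F i in F. padic_val_ge p (g i) k)"
proof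
  assume small: "\<forall>e>0. \<forall>\<^sub>F i in F. padic_abs p (g i) < e"
  show "\<forall>k. \<forall>\<^sub>F i in F. padic_val_ge p (g i) k"
  proof
    fix k
    have "\<forall>\<^sub>F i in F. padic_abs p (g i) < real p powr (- of_int (k - 1))"
      using small p_gt_1 by simp
    then show "\<forall>\<^sub>F i in F. padic_val_ge p (g i) k"
      by eventually_elim (simp only: padic_abs_less_iff diff_add_cancel)
  qed
next
  assume large: "\<forall>k. \<forall>\<^sub>F i in F. padic_val_ge p (g i) k"
  show "\<forall>e>0. \<forall>\<^sub>F i in F. padic_abs p (g i) < e"
  proof (intro allI impI)
    fix e :: real
    assume "e > 0"
    have "inverse (real p) < 1" using p_gt_1 by (simp add: inverse_less_1_iff)
    with \<open>e > 0\<close> obtain n where n: "inverse (real p) ^ n < e" using real_arch_pow_inv by blast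
    have "real p powr (- of_int (int n)) = inverse (real p) ^ n"
      using p_gt_1 by (simp add: powr_minus powr_realpow power_inverse)
    with n large[rule_format, of "int n + 1"]
    show "\<forall>\<^sub>F i in F. padic_abs p (g i) < e"
      by (auto elim!: eventually_mono simp flip: padic_abs_less_iff)
  qed
qed

lemma padic_cauchy_iff: "padic_cauchy p X \<longleftrightarrow> val_cauchy X"
proof -
  have "padic_cauchy p X \<longleftrightarrow>
      (\<forall>e>0. \<forall>\<^sub>F (m, n) in sequentially \<times>\<^sub>F sequentially. padic_abs p (X m - X n) < e)"
    unfolding padic_cauchy_def eventually_prod_sequentially by (simp, meson)
  also have "\<dots> \<longleftrightarrow> val_cauchy X"
    using padic_abs_eventually_small_iff[of "\<lambda>(m, n). X m - X n"]
    unfolding val_cauchy_def by (simp add: case_prod_unfold)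
  finally show ?thesis .
qed

lemma padic_equiv_iff: "padic_equiv p X Y \<longleftrightarrow> val_equiv X Y"
proof -
  have "padic_abs p q \<ge> 0" for q
    unfolding padic_abs_def by (auto split: prod.splits)
  then show ?thesis
    unfolding padic_equiv_def val_equiv_def tendsto_iff padic_abs_eventually_small_iff[symmetric]
    by (simp add: dist_real_def)
qed

lemma val_cauchyI:
  "(\<And>k. \<forall>\<^sub>F (m, n) in sequentially \<times>\<^sub>F sequentially. padic_val_ge p (X m - X n) k) \<Longrightarrow> val_cauchy X"
  unfolding val_cauchy_def by blast

lemma val_cauchyD:
  "val_cauchy X \<Longrightarrow> \<forall>\<^sub>F (m, n) in sequentially \<times>\<^sub>F sequentially. padic_val_ge p (X m - X n) k"
  unfolding val_cauchy_def by blast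

lemma val_equivI: "(\<And>k. \<forall>\<^sub>F n in sequentially. padic_val_ge p (X n - Y n) k) \<Longrightarrow> val_equiv X Y"
  unfolding val_equiv_def by blast

lemma val_equivD: "val_equiv X Y \<Longrightarrow> \<forall>\<^sub>F n in sequentially. padic_val_ge p (X n - Y n) k"
  unfolding val_equiv_def by blast

lemma val_equiv_refl: "val_equiv X X"
  unfolding val_equiv_def by simp

lemma val_equiv_sym: "val_equiv X Y \<Longrightarrow> val_equiv Y X"
  unfolding val_equiv_def by (simp add: padic_val_ge_diff_commute)

lemma val_equiv_trans:
  assumes "val_equiv X Y" "val_equiv Y Z"
  shows "val_equiv X Z"
proof (rule val_equivI)
  fix k
  from val_equivD[OF assms(1), of k] val_equivD[OF assms(2), of k]
  show "\<forall>\<^sub>F n in sequentially. padic_val_ge p (X n - Z n) k"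
    by eventually_elim (drule (1) padic_val_ge_add, simp)
qed

lemma val_cauchy_const: "val_cauchy (\<lambda>n. c)"
  unfolding val_cauchy_def by (simp add: case_prod_unfold)

lemma val_cauchy_add:
  assumes "val_cauchy X" "val_cauchy Y"
  shows "val_cauchy (\<lambda>n. X n + Y n)"
proof (rule val_cauchyI)
  fix k
  from val_cauchyD[OF assms(1), of k] val_cauchyD[OF assms(2), of k]
  show "\<forall>\<^sub>F (m, n) in sequentially \<times>\<^sub>F sequentially. padic_val_ge p ((X m + Y m) - (X n + Y n)) k"
    by eventually_elim (auto dest: padic_val_ge_add simp: algebra_simps)
qed

lemma val_cauchy_minus: "val_cauchy X \<Longrightarrow> val_cauchy (\<lambda>n. - X n)"
  unfolding val_cauchy_def by (simp add: padic_val_ge_diff_commute)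

lemma val_cauchy_diff: "val_cauchy X \<Longrightarrow> val_cauchy Y \<Longrightarrow> val_cauchy (\<lambda>n. X n - Y n)"
  using val_cauchy_add[of X "\<lambda>n. - Y n"] val_cauchy_minus[of Y] by simp

lemma val_equiv_add:
  assumes "val_equiv X X'" "val_equiv Y Y'"
  shows "val_equiv (\<lambda>n. X n + Y n) (\<lambda>n. X' n + Y' n)"
proof (rule val_equivI)
  fix k
  from val_equivD[OF assms(1), of k] val_equivD[OF assms(2), of k]
  show "\<forall>\<^sub>F n in sequentially. padic_val_ge p ((X n + Y n) - (X' n + Y' n)) k"
    by eventually_elim (drule (1) padic_val_ge_add, simp add: algebra_simps)
qed

lemma val_equiv_minus: "val_equiv X X' \<Longrightarrow> val_equiv (\<lambda>n. - X n) (\<lambda>n. - X' n)"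
  unfolding val_equiv_def by (simp add: padic_val_ge_diff_commute)

lemma val_equiv_diff:
  "val_equiv X X' \<Longrightarrow> val_equiv Y Y' \<Longrightarrow> val_equiv (\<lambda>n. X n - Y n) (\<lambda>n. X' n - Y' n)"
  by (drule val_equiv_add[OF _ val_equiv_minus]) simp_all

lemma val_cauchy_bounded:
  assumes "val_cauchy X"
  obtains B where "\<And>n. padic_val_ge p (X n) B"
proof -
  obtain N where N: "\<And>m n. m \<ge> N \<Longrightarrow> n \<ge> N \<Longrightarrow> padic_val_ge p (X m - X n) 0"
    using val_cauchyD[OF assms, of 0] unfolding eventually_prod_sequentially by auto
  define B where "B = - (\<Sum>n\<le>N. \<bar>padic_val p (X n)\<bar>)"
  have "B \<le> 0" unfolding B_def by (simp add: sum_nonneg)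
  have initial: "padic_val_ge p (X n) B" if "n \<le> N" for n
  proof -
    have "\<bar>padic_val p (X n)\<bar> \<le> (\<Sum>n\<le>N. \<bar>padic_val p (X n)\<bar>)"
      by (rule member_le_sum) (use that in auto)
    then show ?thesis unfolding B_def padic_val_ge_def by linarith
  qed
  have "padic_val_ge p (X n) B" for n
  proof (cases "n \<le> N")
    case False
    then have "padic_val_ge p (X n - X N) B"
      using N[of n N] padic_val_ge_mono \<open>B \<le> 0\<close> by simp
    with initial[of N] show ?thesis using padic_val_ge_add by fastforce
  qed (rule initial)
  then show ?thesis using that by blast
qed

lemma val_equiv_mult_left:
  assumes "val_equiv Y Y'" "\<And>n. padic_val_ge p (X n) B"
  shows "val_equiv (\<lambda>n. X n * Y n) (\<lambda>n. X n * Y' n)"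
proof (rule val_equivI)
  fix k
  from val_equivD[OF assms(1), of "k - B"]
  show "\<forall>\<^sub>F n in sequentially. padic_val_ge p (X n * Y n - X n * Y' n) k"
  proof eventually_elim
    case (elim n)
    then have "padic_val_ge p (X n * (Y n - Y' n)) (B + (k - B))"
      by (rule padic_val_ge_mult[OF assms(2)])
    then show ?case by (simp add: algebra_simps)
  qed
qed

lemma val_equiv_mult:
  assumes "val_cauchy X" "val_cauchy Y'" "val_equiv X X'" "val_equiv Y Y'"
  shows "val_equiv (\<lambda>n. X n * Y n) (\<lambda>n. X' n * Y' n)"
proof -
  obtain B B' where "\<And>n. padic_val_ge p (X n) B" "\<And>n. padic_val_ge p (Y' n) B'"
    using val_cauchy_bounded assms(1,2) by metis
  then have "val_equiv (\<lambda>n. X n * Y n) (\<lambda>n. X n * Y' n)"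
    "val_equiv (\<lambda>n. Y' n * X n) (\<lambda>n. Y' n * X' n)"
    using val_equiv_mult_left assms(3,4) by blast+
  then show ?thesis by (auto simp: mult.commute intro: val_equiv_trans)
qed

lemma val_cauchy_mult:
  assumes "val_cauchy X" "val_cauchy Y"
  shows "val_cauchy (\<lambda>n. X n * Y n)"
proof (rule val_cauchyI)
  fix k
  obtain B B' where B: "\<And>n. padic_val_ge p (X n) B" and B': "\<And>n. padic_val_ge p (Y n) B'"
    using val_cauchy_bounded assms by metis
  from val_cauchyD[OF assms(1), of "k - B'"] val_cauchyD[OF assms(2), of "k - B"]
  show "\<forall>\<^sub>F (m, n) in sequentially \<times>\<^sub>F sequentially. padic_val_ge p (X m * Y m - X n * Y n) k"
  proof eventually_elim
    case (elim mn)
    obtain m n where mn: "mn = (m, n)" by fastforce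
    with elim have "padic_val_ge p (Y m - Y n) (k - B)" "padic_val_ge p (X m - X n) (k - B')"
      by simp_all
    then have "padic_val_ge p (X m * (Y m - Y n)) (B + (k - B))"
      "padic_val_ge p ((X m - X n) * Y n) ((k - B') + B')"
      using B B' padic_val_ge_mult by blast+
    then have "padic_val_ge p (X m * (Y m - Y n) + (X m - X n) * Y n) k"
      by (simp add: padic_val_ge_add)
    then show ?case using mn by (simp add: algebra_simps)
  qed
qed

definition has_eventual_val :: "(nat \<Rightarrow> rat) \<Rightarrow> int \<Rightarrow> bool" where
  "has_eventual_val X K \<longleftrightarrow> (\<forall>\<^sub>F n in sequentially. X n \<noteq> 0 \<and> padic_val p (X n) = K)"

lemma has_eventual_val_unique:
  assumes "has_eventual_val X K" "has_eventual_val X L"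
  shows "K = L"
proof -
  from assms have "\<forall>\<^sub>F n in sequentially. K = L"
    unfolding has_eventual_val_def by eventually_elim auto
  then show ?thesis by simp
qed

lemma val_cauchy_has_eventual_val:
  assumes "val_cauchy X" "\<not> val_equiv X (\<lambda>n. 0)"
  obtains K where "has_eventual_val X K"
proof -
  obtain k where frequent: "\<forall>N. \<exists>n\<ge>N. \<not> padic_val_ge p (X n) k"
    using assms(2) unfolding val_equiv_def eventually_sequentially by auto
  obtain N where N: "\<And>m n. m \<ge> N \<Longrightarrow> n \<ge> N \<Longrightarrow> padic_val_ge p (X m - X n) k"
    using val_cauchyD[OF assms(1), of k] unfolding eventually_prod_sequentially by auto
  obtain n0 where n0: "n0 \<ge> N" "\<not> padic_val_ge p (X n0) k" using frequent by blast
  then have "X n0 \<noteq> 0" "padic_val p (X n0) < k" unfolding padic_val_ge_def by auto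
  then have "X n \<noteq> 0 \<and> padic_val p (X n) = padic_val p (X n0)" if "n \<ge> N" for n
    by (intro padic_val_eq_near padic_val_ge_mono[OF N[OF that n0(1)]]) auto
  then have "has_eventual_val X (padic_val p (X n0))"
    unfolding has_eventual_val_def eventually_sequentially by blast
  then show ?thesis by (rule that)
qed

lemma has_eventual_val_equiv:
  assumes "has_eventual_val X K" "val_equiv X Y"
  shows "has_eventual_val Y K"
  using assms(1) val_equivD[OF assms(2), of "K + 1"] unfolding has_eventual_val_def
proof eventually_elim
  case (elim n)
  then have "padic_val_ge p (Y n - X n) (padic_val p (X n) + 1)"
    by (simp add: padic_val_ge_diff_commute)
  with elim padic_val_eq_near[of "X n" "Y n"] show ?case by simp
qed

lemma has_eventual_val_not_null:
  assumes "has_eventual_val X K"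
  shows "\<not> val_equiv X (\<lambda>n. 0)"
proof
  assume "val_equiv X (\<lambda>n. 0)"
  from assms val_equivD[OF this, of "K + 1"] have "\<forall>\<^sub>F n in sequentially. False"
    unfolding has_eventual_val_def by eventually_elim (simp add: padic_val_ge_def)
  then show False by simp
qed

lemma val_cauchy_inverse:
  assumes "val_cauchy X" "\<not> val_equiv X (\<lambda>n. 0)"
  shows "val_cauchy (\<lambda>n. inverse (X n))"
proof (rule val_cauchyI)
  fix k
  obtain K where "has_eventual_val X K" using val_cauchy_has_eventual_val assms by blast
  from eventually_pair_sequentially[OF this[unfolded has_eventual_val_def]]
    val_cauchyD[OF assms(1), of "k + 2 * K"]
  show "\<forall>\<^sub>F (m, n) in sequentially \<times>\<^sub>F sequentially.
      padic_val_ge p (inverse (X m) - inverse (X n)) k"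
  proof eventually_elim
    case (elim mn)
    obtain m n where "mn = (m, n)" by fastforce
    with elim show ?case by (auto intro!: padic_val_ge_inverse_diff[of _ _ K])
  qed
qed

lemma val_equiv_inverse:
  assumes "val_cauchy X" "\<not> val_equiv X (\<lambda>n. 0)" "val_equiv X Y"
  shows "val_equiv (\<lambda>n. inverse (X n)) (\<lambda>n. inverse (Y n))"
proof (rule val_equivI)
  fix k
  obtain K where K: "has_eventual_val X K" using val_cauchy_has_eventual_val assms by blast
  from K has_eventual_val_equiv[OF K assms(3)] val_equivD[OF assms(3), of "k + 2 * K"]
  show "\<forall>\<^sub>F n in sequentially. padic_val_ge p (inverse (X n) - inverse (Y n)) k"
    unfolding has_eventual_val_def
    by eventually_elim (auto intro!: padic_val_ge_inverse_diff[of _ _ K])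
qed

section \<open>The field of p-adic numbers\<close>

abbreviation cls :: "(nat \<Rightarrow> rat) \<Rightarrow> (nat \<Rightarrow> rat) set" where
  "cls \<equiv> padic_class p"

lemma mem_padic_class_iff: "Y \<in> cls X \<longleftrightarrow> val_cauchy Y \<and> val_equiv X Y"
  unfolding padic_class_def padic_cauchy_iff padic_equiv_iff by simp

lemma padic_eq_classes: "padic p = {cls X | X. val_cauchy X}"
  unfolding padic_def padic_cauchy_iff ..

lemma padic_class_self: "val_cauchy X \<Longrightarrow> X \<in> cls X"
  using mem_padic_class_iff val_equiv_refl by simp

lemma padic_class_eqI: "val_equiv X Y \<Longrightarrow> cls X = cls Y"
  using mem_padic_class_iff val_equiv_trans val_equiv_sym by blast

lemma padic_class_eq_iff: "val_cauchy X \<Longrightarrow> cls X = cls Y \<longleftrightarrow> val_equiv X Y"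
  using padic_class_eqI padic_class_self mem_padic_class_iff val_equiv_sym by blast

lemma padic_class_in_padic: "val_cauchy X \<Longrightarrow> cls X \<in> padic p"
  unfolding padic_eq_classes by blast

lemma padicE:
  assumes "x \<in> padic p"
  obtains X where "val_cauchy X" "x = cls X"
  using assms unfolding padic_eq_classes by blast

lemma padic_rep_class:
  assumes "val_cauchy X"
  shows "val_cauchy (padic_rep (cls X))" "val_equiv X (padic_rep (cls X))"
proof -
  have "padic_rep (cls X) \<in> cls X"
    unfolding padic_rep_def using padic_class_self[OF assms]
      by (rule someI[where P = "\<lambda>Y. Y \<in> cls X"])
  then show "val_cauchy (padic_rep (cls X))" "val_equiv X (padic_rep (cls X))"
    using mem_padic_class_iff by auto
qed

lemma padic_zero_eq: "padic_zero p = cls (\<lambda>n. 0)"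
  unfolding padic_zero_def ..

lemma padic_class_eq_zero_iff: "val_cauchy X \<Longrightarrow> cls X = padic_zero p \<longleftrightarrow> val_equiv X (\<lambda>n. 0)"
  unfolding padic_zero_eq using padic_class_eq_iff by simp

lemma padic_add_class:
  "val_cauchy X \<Longrightarrow> val_cauchy Y \<Longrightarrow> padic_add p (cls X) (cls Y) = cls (\<lambda>n. X n + Y n)"
  unfolding padic_add_def
    by (intro padic_class_eqI val_equiv_add val_equiv_sym[OF padic_rep_class(2)])

lemma padic_sub_class:
  "val_cauchy X \<Longrightarrow> val_cauchy Y \<Longrightarrow> padic_sub p (cls X) (cls Y) = cls (\<lambda>n. X n - Y n)"
  unfolding padic_sub_def
    by (intro padic_class_eqI val_equiv_diff val_equiv_sym[OF padic_rep_class(2)])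

lemma padic_mult_class:
  "val_cauchy X \<Longrightarrow> val_cauchy Y \<Longrightarrow> padic_mult p (cls X) (cls Y) = cls (\<lambda>n. X n * Y n)"
  unfolding padic_mult_def
  by (intro padic_class_eqI val_equiv_mult val_equiv_sym[OF padic_rep_class(2)] padic_rep_class(1))

lemma padic_inverse_class:
  assumes "val_cauchy X" "\<not> val_equiv X (\<lambda>n. 0)"
  shows "padic_inverse p (cls X) = cls (\<lambda>n. inverse (X n))"
proof -
  have "cls X \<noteq> padic_zero p" using padic_class_eq_zero_iff assms by simp
  then have "padic_inverse p (cls X) = cls (\<lambda>n. inverse (padic_rep (cls X) n))"
    unfolding padic_inverse_def by simp
  also have "\<dots> = cls (\<lambda>n. inverse (X n))"
    by (intro padic_class_eqI val_equiv_sym[OF val_equiv_inverse] assms padic_rep_class)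
  finally show ?thesis .
qed

lemma padic_mult_inverse_class:
  assumes "val_cauchy X" "\<not> val_equiv X (\<lambda>n. 0)"
  shows "padic_mult p (cls X) (cls (\<lambda>n. inverse (X n))) = cls (\<lambda>n. 1)"
proof -
  obtain K where "has_eventual_val X K" using val_cauchy_has_eventual_val assms by blast
  then have "val_equiv (\<lambda>n. X n * inverse (X n)) (\<lambda>n. 1)"
    unfolding has_eventual_val_def val_equiv_def by (auto elim: eventually_mono)
  then show ?thesis using assms by (simp add: padic_mult_class val_cauchy_inverse padic_class_eqI)
qed

end

definition Qp :: "nat \<Rightarrow> (nat \<Rightarrow> rat) set ring" where
  "Qp p = \<lparr>carrier = padic p, mult = padic_mult p, one = padic_class p (\<lambda>n. 1),
           zero = padic_zero p, add = padic_add p\<rparr>"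

context prime_padic
begin

lemma Qp_simps [simp]:
  "carrier (Qp p) = padic p" "add (Qp p) = padic_add p" "mult (Qp p) = padic_mult p"
  "zero (Qp p) = cls (\<lambda>n. 0)" "one (Qp p) = cls (\<lambda>n. 1)"
  by (simp_all add: Qp_def padic_zero_eq)

lemma Qp_abelian_group: "abelian_group (Qp p)"
proof (rule abelian_groupI, simp_all)
  fix x y assume "x \<in> padic p" "y \<in> padic p"
  then show "padic_add p x y \<in> padic p"
    by (auto elim!: padicE simp: padic_add_class val_cauchy_add padic_class_in_padic)
next
  show "cls (\<lambda>n. 0) \<in> padic p" by (intro padic_class_in_padic val_cauchy_const)
next
  fix x y z assume "x \<in> padic p" "y \<in> padic p" "z \<in> padic p"
  then show "padic_add p (padic_add p x y) z = padic_add p x (padic_add p y z)"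
    by (auto elim!: padicE simp: padic_add_class val_cauchy_add add.assoc)
next
  fix x y assume "x \<in> padic p" "y \<in> padic p"
  then show "padic_add p x y = padic_add p y x"
    by (auto elim!: padicE simp: padic_add_class add.commute)
next
  fix x assume "x \<in> padic p"
  then show "padic_add p (cls (\<lambda>n. 0)) x = x"
    by (auto elim!: padicE simp: padic_add_class val_cauchy_const)
next
  fix x assume "x \<in> padic p"
  then obtain X where X: "val_cauchy X" "x = cls X" by (rule padicE)
  then have "padic_add p (cls (\<lambda>n. - X n)) x = cls (\<lambda>n. 0)"
    by (simp add: padic_add_class val_cauchy_minus)
  moreover have "cls (\<lambda>n. - X n) \<in> padic p"
    using X by (simp add: padic_class_in_padic val_cauchy_minus)
  ultimately show "\<exists>y\<in>padic p. padic_add p y x = cls (\<lambda>n. 0)" by blast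
qed

lemma Qp_comm_monoid: "comm_monoid (Qp p)"
proof (rule comm_monoidI, simp_all)
  fix x y assume "x \<in> padic p" "y \<in> padic p"
  then show "padic_mult p x y \<in> padic p"
    by (auto elim!: padicE simp: padic_mult_class val_cauchy_mult padic_class_in_padic)
next
  show "cls (\<lambda>n. 1) \<in> padic p" by (intro padic_class_in_padic val_cauchy_const)
next
  fix x y z assume "x \<in> padic p" "y \<in> padic p" "z \<in> padic p"
  then show "padic_mult p (padic_mult p x y) z = padic_mult p x (padic_mult p y z)"
    by (auto elim!: padicE simp: padic_mult_class val_cauchy_mult mult.assoc)
next
  fix x assume "x \<in> padic p"
  then show "padic_mult p (cls (\<lambda>n. 1)) x = x"
    by (auto elim!: padicE simp: padic_mult_class val_cauchy_const)
next
  fix x y assume "x \<in> padic p" "y \<in> padic p"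
  then show "padic_mult p x y = padic_mult p y x"
    by (auto elim!: padicE simp: padic_mult_class mult.commute)
qed

lemma Qp_cring: "cring (Qp p)"
proof (rule cringI[OF Qp_abelian_group Qp_comm_monoid])
  fix x y z assume "x \<in> carrier (Qp p)" "y \<in> carrier (Qp p)" "z \<in> carrier (Qp p)"
  then show "(x \<oplus>\<^bsub>Qp p\<^esub> y) \<otimes>\<^bsub>Qp p\<^esub> z = x \<otimes>\<^bsub>Qp p\<^esub> z \<oplus>\<^bsub>Qp p\<^esub> y \<otimes>\<^bsub>Qp p\<^esub> z"
    by (auto elim!: padicE simp: padic_mult_class padic_add_class val_cauchy_mult val_cauchy_add
        distrib_right)
qed

lemma Qp_field: "field (Qp p)"
proof (rule cring.cring_fieldI2[OF Qp_cring])
  have "\<not> val_equiv (\<lambda>n. 0) (\<lambda>n. 1)"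
    using val_equivD[of "\<lambda>n. 0" "\<lambda>n. 1" 1] by (auto simp: padic_val_ge_def)
  then show "\<zero>\<^bsub>Qp p\<^esub> \<noteq> \<one>\<^bsub>Qp p\<^esub>"
    using padic_class_eq_iff[OF val_cauchy_const] by simp
next
  fix a assume "a \<in> carrier (Qp p)" "a \<noteq> \<zero>\<^bsub>Qp p\<^esub>"
  then obtain X where X: "val_cauchy X" "a = cls X" "\<not> val_equiv X (\<lambda>n. 0)"
    using padic_class_eq_zero_iff padic_zero_eq by (auto elim!: padicE)
  then show "\<exists>b\<in>carrier (Qp p). a \<otimes>\<^bsub>Qp p\<^esub> b = \<one>\<^bsub>Qp p\<^esub>"
    using padic_mult_inverse_class[OF X(1,3)] padic_class_in_padic[OF val_cauchy_inverse[OF X(1,3)]]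
    by auto
qed

end

sublocale prime_padic \<subseteq> Qp: field "Qp p"
  by (rule Qp_field)

context prime_padic
begin

section \<open>The valuation of the p-adic numbers\<close>

lemma Qp_nonzero_class_not_null: "val_cauchy X \<Longrightarrow> cls X \<noteq> \<zero>\<^bsub>Qp p\<^esub> \<Longrightarrow> \<not> val_equiv X (\<lambda>n. 0)"
  using padic_class_eqI by auto

lemma Qp_a_inv_class: "val_cauchy X \<Longrightarrow> \<ominus>\<^bsub>Qp p\<^esub> (cls X) = cls (\<lambda>n. - X n)"
  using Qp.minus_equality[of "cls (\<lambda>n. - X n)" "cls X"]
  by (simp add: padic_add_class val_cauchy_minus padic_class_in_padic)

lemma Qp_minus_eq: "x \<in> padic p \<Longrightarrow> y \<in> padic p \<Longrightarrow> x \<ominus>\<^bsub>Qp p\<^esub> y = padic_sub p x y"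
  by (auto elim!: padicE simp: a_minus_def Qp_a_inv_class padic_add_class padic_sub_class
      val_cauchy_minus)

lemma Qp_minus_class: "val_cauchy X \<Longrightarrow> val_cauchy Y \<Longrightarrow> cls X \<ominus>\<^bsub>Qp p\<^esub> cls Y = cls (\<lambda>n. X n - Y n)"
  by (simp add: Qp_minus_eq padic_sub_class padic_class_in_padic)

lemma Qp_inv_eq:
  assumes "y \<in> padic p" "y \<noteq> padic_zero p"
  shows "inv\<^bsub>Qp p\<^esub> y = padic_inverse p y"
proof -
  obtain Y where Y: "val_cauchy Y" "y = cls Y" using assms(1) by (rule padicE)
  with assms have "\<not> val_equiv Y (\<lambda>n. 0)" using padic_class_eq_zero_iff by simp
  with Y have "y \<otimes>\<^bsub>Qp p\<^esub> padic_inverse p y = \<one>\<^bsub>Qp p\<^esub>" "padic_inverse p y \<in> padic p"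
    by (simp_all add: padic_inverse_class padic_mult_inverse_class padic_class_in_padic
        val_cauchy_inverse)
  then show ?thesis using Qp.comm_inv_char assms(1) by simp
qed

lemma Qp_divide_eq:
  "x \<in> padic p \<Longrightarrow> y \<in> padic p \<Longrightarrow> y \<noteq> padic_zero p \<Longrightarrow> padic_divide p x y = x \<otimes>\<^bsub>Qp p\<^esub> inv\<^bsub>Qp p\<^esub> y"
  by (simp add: padic_divide_def Qp_inv_eq)

text \<open>The zero class has no eventual valuation, so \<open>Qp_val\<close> is unspecified there.\<close>

definition Qp_val :: "(nat \<Rightarrow> rat) set \<Rightarrow> int" where
  "Qp_val x = (THE K. has_eventual_val (padic_rep x) K)"

definition Qp_of_rat :: "rat \<Rightarrow> (nat \<Rightarrow> rat) set" where
  "Qp_of_rat q = cls (\<lambda>n. q)"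

lemma Qp_val_class:
  assumes "val_cauchy X" "\<not> val_equiv X (\<lambda>n. 0)"
  shows "has_eventual_val X (Qp_val (cls X))"
proof -
  obtain K where K: "has_eventual_val X K" using val_cauchy_has_eventual_val assms by blast
  then have "has_eventual_val (padic_rep (cls X)) K"
    using has_eventual_val_equiv padic_rep_class(2)[OF assms(1)] by blast
  then have "Qp_val (cls X) = K" unfolding Qp_val_def using has_eventual_val_unique by blast
  with K show ?thesis by simp
qed

lemma Qp_val_class_eq: "val_cauchy X \<Longrightarrow> has_eventual_val X K \<Longrightarrow> Qp_val (cls X) = K"
  using Qp_val_class has_eventual_val_not_null has_eventual_val_unique by blast

lemma Qp_val_ge_iff:
  assumes "val_cauchy X"
  shows "cls X = \<zero>\<^bsub>Qp p\<^esub> \<or> k \<le> Qp_val (cls X) \<longleftrightarrow> (\<forall>\<^sub>F n in sequentially. padic_val_ge p (X n) k)"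
proof (cases "cls X = \<zero>\<^bsub>Qp p\<^esub>")
  case True
  then have "val_equiv X (\<lambda>n. 0)" using padic_class_eq_iff[OF assms] by simp
  with True show ?thesis using val_equivD[of X "\<lambda>n. 0" k] by simp
next
  case False
  then have val: "has_eventual_val X (Qp_val (cls X))"
    using Qp_val_class Qp_nonzero_class_not_null assms by blast
  have "k \<le> Qp_val (cls X)" if "\<forall>\<^sub>F n in sequentially. padic_val_ge p (X n) k"
  proof -
    from val that have "\<forall>\<^sub>F n in sequentially. k \<le> Qp_val (cls X)"
      unfolding has_eventual_val_def by eventually_elim (auto simp: padic_val_ge_def)
    then show ?thesis by simp
  qed
  moreover from val have "k \<le> Qp_val (cls X) \<Longrightarrow> \<forall>\<^sub>F n in sequentially. padic_val_ge p (X n) k"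
    unfolding has_eventual_val_def by (auto elim: eventually_mono simp: padic_val_ge_def)
  ultimately show ?thesis using False by blast
qed

lemma Qp_of_rat_closed: "Qp_of_rat q \<in> carrier (Qp p)"
  by (simp add: Qp_of_rat_def padic_class_in_padic val_cauchy_const)

lemma Qp_of_rat_add: "Qp_of_rat (a + b) = Qp_of_rat a \<oplus>\<^bsub>Qp p\<^esub> Qp_of_rat b"
  by (simp add: Qp_of_rat_def padic_add_class val_cauchy_const)

lemma Qp_of_rat_mult: "Qp_of_rat (a * b) = Qp_of_rat a \<otimes>\<^bsub>Qp p\<^esub> Qp_of_rat b"
  by (simp add: Qp_of_rat_def padic_mult_class val_cauchy_const)

lemma Qp_of_rat_one: "Qp_of_rat 1 = \<one>\<^bsub>Qp p\<^esub>"
  by (simp add: Qp_of_rat_def)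

lemma Qp_val_of_rat: "q \<noteq> 0 \<Longrightarrow> Qp_val (Qp_of_rat q) = padic_val p q"
  unfolding Qp_of_rat_def
    by (rule Qp_val_class_eq[OF val_cauchy_const]) (simp add: has_eventual_val_def)

lemma Qp_val_mult:
  assumes "x \<in> carrier (Qp p)" "y \<in> carrier (Qp p)" "x \<noteq> \<zero>\<^bsub>Qp p\<^esub>" "y \<noteq> \<zero>\<^bsub>Qp p\<^esub>"
  shows "Qp_val (x \<otimes>\<^bsub>Qp p\<^esub> y) = Qp_val x + Qp_val y"
proof -
  obtain X Y where XY: "val_cauchy X" "val_cauchy Y" "x = cls X" "y = cls Y"
    using assms(1,2) by (auto elim!: padicE)
  with assms have "has_eventual_val X (Qp_val x)" "has_eventual_val Y (Qp_val y)"
    using Qp_val_class Qp_nonzero_class_not_null by auto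
  then have "has_eventual_val (\<lambda>n. X n * Y n) (Qp_val x + Qp_val y)"
    unfolding has_eventual_val_def by eventually_elim (simp add: padic_val_mult)
  then show ?thesis
    using Qp_val_class_eq[OF val_cauchy_mult[OF XY(1,2)]] XY padic_mult_class by simp
qed

lemma Qp_val_add:
  assumes "x \<in> carrier (Qp p)" "y \<in> carrier (Qp p)" "x \<noteq> \<zero>\<^bsub>Qp p\<^esub>" "y \<noteq> \<zero>\<^bsub>Qp p\<^esub>"
    and "x \<oplus>\<^bsub>Qp p\<^esub> y \<noteq> \<zero>\<^bsub>Qp p\<^esub>"
  shows "Qp_val (x \<oplus>\<^bsub>Qp p\<^esub> y) \<ge> min (Qp_val x) (Qp_val y)"
proof -
  obtain X Y where XY: "val_cauchy X" "val_cauchy Y" "x = cls X" "y = cls Y"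
    using assms(1,2) by (auto elim!: padicE)
  then have sum: "x \<oplus>\<^bsub>Qp p\<^esub> y = cls (\<lambda>n. X n + Y n)" "val_cauchy (\<lambda>n. X n + Y n)"
    by (simp_all add: padic_add_class val_cauchy_add)
  with assms XY have "has_eventual_val X (Qp_val x)" "has_eventual_val Y (Qp_val y)"
    "has_eventual_val (\<lambda>n. X n + Y n) (Qp_val (x \<oplus>\<^bsub>Qp p\<^esub> y))"
    using Qp_val_class Qp_nonzero_class_not_null by auto
  then have "\<forall>\<^sub>F n in sequentially. Qp_val (x \<oplus>\<^bsub>Qp p\<^esub> y) \<ge> min (Qp_val x) (Qp_val y)"
    unfolding has_eventual_val_def
  proof eventually_elim
    case (elim n)
    then show ?case using padic_val_add[of "X n" "Y n"] by auto
  qed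
  then show ?thesis by simp
qed

lemma Qp_rat_dense:
  assumes "x \<in> carrier (Qp p)"
  obtains q where "x \<ominus>\<^bsub>Qp p\<^esub> Qp_of_rat q = \<zero>\<^bsub>Qp p\<^esub> \<or> Qp_val (x \<ominus>\<^bsub>Qp p\<^esub> Qp_of_rat q) \<ge> k"
proof -
  obtain X where X: "val_cauchy X" "x = cls X" using assms by (auto elim!: padicE)
  obtain N where N: "\<And>m n. m \<ge> N \<Longrightarrow> n \<ge> N \<Longrightarrow> padic_val_ge p (X m - X n) k"
    using val_cauchyD[OF X(1), of k] unfolding eventually_prod_sequentially by auto
  then have "\<forall>\<^sub>F n in sequentially. padic_val_ge p (X n - X N) k"
    unfolding eventually_sequentially by blast
  moreover have "x \<ominus>\<^bsub>Qp p\<^esub> Qp_of_rat (X N) = cls (\<lambda>n. X n - X N)"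
    unfolding Qp_of_rat_def using Qp_minus_class X val_cauchy_const by simp
  ultimately have "x \<ominus>\<^bsub>Qp p\<^esub> Qp_of_rat (X N) = \<zero>\<^bsub>Qp p\<^esub> \<or> k \<le> Qp_val (x \<ominus>\<^bsub>Qp p\<^esub> Qp_of_rat (X N))"
    using Qp_val_ge_iff[OF val_cauchy_diff[OF X(1) val_cauchy_const]] by simp
  then show ?thesis by (rule that)
qed

section \<open>Square roots of principal units\<close>

text \<open>Newton's iteration for a square root of \<open>a\<close>, with the derivative \<open>2 z\<close> replaced by \<open>2\<close>
  since \<open>z\<close> stays close to \<open>1\<close>.\<close>

lemma rat_sqrt_newton_step:
  assumes z: "padic_val_ge p (z - 1) (padic_val p 2 + 1)"
    and za: "padic_val_ge p (z * z - a) m" and m: "m \<ge> 2 * padic_val p 2 + 1"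
  defines "z' \<equiv> z + (a - z * z) / 2"
  shows "padic_val_ge p (z' - 1) (padic_val p 2 + 1)" "padic_val_ge p (z' * z' - a) (m + 1)"
proof -
  have step: "padic_val_ge p ((a - z * z) / 2) (m - padic_val p 2)"
    using padic_val_ge_half za padic_val_ge_diff_commute by blast
  then have "padic_val_ge p ((a - z * z) / 2) (padic_val p 2 + 1)"
    using padic_val_ge_mono m by fastforce
  with z have "padic_val_ge p ((z - 1) + (a - z * z) / 2) (padic_val p 2 + 1)"
    by (rule padic_val_ge_add)
  then show "padic_val_ge p (z' - 1) (padic_val p 2 + 1)" unfolding z'_def
    by (simp add: algebra_simps)
  have "padic_val_ge p ((z * z - a) * (1 - z)) (m + (padic_val p 2 + 1))"
    using padic_val_ge_mult[OF za] z padic_val_ge_diff_commute by blast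
  moreover have "padic_val_ge p ((a - z * z) / 2 * ((a - z * z) / 2))
      ((m - padic_val p 2) + (m - padic_val p 2))"
    using padic_val_ge_mult[OF step step] .
  ultimately have "padic_val_ge p ((z * z - a) * (1 - z)) (m + 1)"
    "padic_val_ge p ((a - z * z) / 2 * ((a - z * z) / 2)) (m + 1)"
    using m padic_val_two_nonneg by (auto elim!: padic_val_ge_mono)
  then have "padic_val_ge p ((z * z - a) * (1 - z) + (a - z * z) / 2 * ((a - z * z) / 2)) (m + 1)"
    by (rule padic_val_ge_add)
  moreover have "z' * z' - a = (z * z - a) * (1 - z) + (a - z * z) / 2 * ((a - z * z) / 2)"
    unfolding z'_def by (simp add: field_simps)
  ultimately show "padic_val_ge p (z' * z' - a) (m + 1)" by simp
qed

lemma rat_sqrt_approx: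
  assumes "padic_val_ge p (a - 1) (2 * padic_val p 2 + 1)"
  shows "\<exists>z. padic_val_ge p (z - 1) (padic_val p 2 + 1) \<and>
    padic_val_ge p (z * z - a) (2 * padic_val p 2 + 1 + int n)"
proof (induction n)
  case 0
  show ?case using assms padic_val_ge_diff_commute by (intro exI[of _ 1]) simp
next
  case (Suc n)
  then obtain z where "padic_val_ge p (z - 1) (padic_val p 2 + 1)"
    "padic_val_ge p (z * z - a) (2 * padic_val p 2 + 1 + int n)" by blast
  from rat_sqrt_newton_step[OF this] show ?case by (auto simp: add.assoc)
qed

lemma padic_val_sum_near_one:
  assumes "padic_val_ge p (u - 1) (padic_val p 2 + 1)" "padic_val_ge p (w - 1) (padic_val p 2 + 1)"
  shows "u + w \<noteq> 0 \<and> padic_val p (u + w) = padic_val p 2"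
proof -
  have "padic_val_ge p ((u + w) - 2) (padic_val p 2 + 1)"
    using padic_val_ge_add[OF assms] by (simp add: algebra_simps)
  then show ?thesis using padic_val_eq_near[of 2 "u + w"] by simp
qed

lemma padic_val_ge_diff_of_squares:
  assumes "padic_val_ge p (u - 1) (padic_val p 2 + 1)" "padic_val_ge p (w - 1) (padic_val p 2 + 1)"
    and "padic_val_ge p (u * u - w * w) (k + padic_val p 2)"
  shows "padic_val_ge p (u - w) k"
proof -
  note sum = padic_val_sum_near_one[OF assms(1,2)]
  then have "u - w = (u * u - w * w) / (u + w)" by (simp add: field_simps)
  with sum assms(3) show ?thesis
    by (cases "u * u - w * w = 0") (simp_all add: padic_val_ge_def padic_val_divide)
qed

lemma val_cauchy_sqrt_near_one:
  assumes X: "val_cauchy X"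
    and near_one: "\<forall>\<^sub>F n in sequentially. padic_val_ge p (X n - 1) (2 * padic_val p 2 + 1)"
  obtains Z where "val_cauchy Z" "val_equiv (\<lambda>n. Z n * Z n) X"
proof -
  define good where "good n z \<longleftrightarrow> padic_val_ge p (z - 1) (padic_val p 2 + 1) \<and>
      padic_val_ge p (z * z - X n) (2 * padic_val p 2 + 1 + int n)" for n z
  define Z where "Z n = (SOME z. good n z)" for n
  from near_one have Z: "\<forall>\<^sub>F n in sequentially. good n (Z n)"
    by eventually_elim (unfold Z_def good_def, rule someI_ex, rule rat_sqrt_approx)
  have "padic_val_ge p (Z n * Z n - X n) k"
    if "good n (Z n)" "k \<le> 2 * padic_val p 2 + 1 + int n" for n k
    using that padic_val_ge_mono unfolding good_def by blast
  note close = this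
  have "val_cauchy Z"
  proof (rule val_cauchyI)
    fix k
    let ?k = "k + padic_val p 2"
    from eventually_pair_sequentially[OF eventually_conj[OF Z eventually_ge_at_top[of "nat ?k"]]]
      val_cauchyD[OF X, of ?k]
    show "\<forall>\<^sub>F (m, n) in sequentially \<times>\<^sub>F sequentially. padic_val_ge p (Z m - Z n) k"
    proof eventually_elim
      case (elim mn)
      obtain m n where mn: "mn = (m, n)" by fastforce
      with elim padic_val_two_nonneg have "padic_val_ge p (Z m * Z m - X m) ?k"
        "padic_val_ge p (X m - X n) ?k" "padic_val_ge p (Z n * Z n - X n) ?k"
        by (auto intro!: close)
      then have "padic_val_ge p ((Z m * Z m - X m) + (X m - X n) - (Z n * Z n - X n)) ?k"
        by (blast intro: padic_val_ge_add padic_val_ge_diff)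
      with elim mn show ?case
        by (auto intro: padic_val_ge_diff_of_squares simp: good_def)
    qed
  qed
  moreover have "val_equiv (\<lambda>n. Z n * Z n) X"
  proof (rule val_equivI)
    fix k
    from Z eventually_ge_at_top[of "nat k"]
    show "\<forall>\<^sub>F n in sequentially. padic_val_ge p (Z n * Z n - X n) k"
      by eventually_elim (use padic_val_two_nonneg in \<open>auto intro!: close\<close>)
  qed
  ultimately show ?thesis by (rule that)
qed

lemma Qp_principal_unit_square:
  assumes "x \<in> carrier (Qp p)"
    and "x \<ominus>\<^bsub>Qp p\<^esub> \<one>\<^bsub>Qp p\<^esub> = \<zero>\<^bsub>Qp p\<^esub> \<or> 2 * padic_val p 2 + 1 \<le> Qp_val (x \<ominus>\<^bsub>Qp p\<^esub> \<one>\<^bsub>Qp p\<^esub>)"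
  shows "\<exists>z\<in>carrier (Qp p). z \<otimes>\<^bsub>Qp p\<^esub> z = x"
proof -
  obtain X where X: "val_cauchy X" "x = cls X" using assms(1) by (auto elim!: padicE)
  then have "x \<ominus>\<^bsub>Qp p\<^esub> \<one>\<^bsub>Qp p\<^esub> = cls (\<lambda>n. X n - 1)"
    using Qp_minus_class val_cauchy_const by simp
  with assms(2) have "\<forall>\<^sub>F n in sequentially. padic_val_ge p (X n - 1) (2 * padic_val p 2 + 1)"
    using Qp_val_ge_iff[OF val_cauchy_diff[OF X(1) val_cauchy_const]] by simp
  with X obtain Z where "val_cauchy Z" "val_equiv (\<lambda>n. Z n * Z n) X"
    by (metis val_cauchy_sqrt_near_one)
  with X have "cls Z \<otimes>\<^bsub>Qp p\<^esub> cls Z = x" "cls Z \<in> carrier (Qp p)"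
    using padic_mult_class padic_class_eqI padic_class_in_padic by simp_all
  then show ?thesis by blast
qed

section \<open>The SD-maps of the p-adic numbers\<close>

lemma Qp_padic_like_field: "padic_like_field (Qp p) Qp_of_rat p Qp_val"
proof (intro padic_like_field.intro rat_field.intro rat_field_axioms.intro
    padic_like_field_axioms.intro Qp_field prime_padic_axioms)
  fix a b
  show "Qp_of_rat (a + b) = Qp_of_rat a \<oplus>\<^bsub>Qp p\<^esub> Qp_of_rat b" by (rule Qp_of_rat_add)
  show "Qp_of_rat (a * b) = Qp_of_rat a \<otimes>\<^bsub>Qp p\<^esub> Qp_of_rat b" by (rule Qp_of_rat_mult)
next
  fix x k
  assume "x \<in> carrier (Qp p)"
  then show "\<exists>q. x \<ominus>\<^bsub>Qp p\<^esub> Qp_of_rat q = \<zero>\<^bsub>Qp p\<^esub> \<or> k \<le> Qp_val (x \<ominus>\<^bsub>Qp p\<^esub> Qp_of_rat q)"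
    by (metis Qp_rat_dense)
qed (simp_all del: Qp_simps add: Qp_of_rat_closed Qp_of_rat_one Qp_val_mult Qp_val_add
  Qp_val_of_rat Qp_principal_unit_square)

lemma padic_sd_quotient:
  assumes "x \<in> padic p" "y \<in> padic p" "x \<noteq> y"
  shows "padic_divide p (padic_add p x y) (padic_sub p x y) =
      (x \<oplus>\<^bsub>Qp p\<^esub> y) \<otimes>\<^bsub>Qp p\<^esub> inv\<^bsub>Qp p\<^esub> (x \<ominus>\<^bsub>Qp p\<^esub> y)"
    "padic_divide p (padic_add p x y) (padic_sub p x y) \<in> padic p"
proof -
  have "x \<ominus>\<^bsub>Qp p\<^esub> y \<noteq> \<zero>\<^bsub>Qp p\<^esub>" "x \<ominus>\<^bsub>Qp p\<^esub> y \<in> padic p"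
    using Qp.minus_eq_zero_iff[of x y] Qp.minus_closed[of x y] assms by simp_all
  then show "padic_divide p (padic_add p x y) (padic_sub p x y) =
      (x \<oplus>\<^bsub>Qp p\<^esub> y) \<otimes>\<^bsub>Qp p\<^esub> inv\<^bsub>Qp p\<^esub> (x \<ominus>\<^bsub>Qp p\<^esub> y)"
    using Qp_divide_eq[of "padic_add p x y" "x \<ominus>\<^bsub>Qp p\<^esub> y"] Qp_minus_eq assms padic_zero_eq
      Qp.a_closed[of x y]
    by simp
  then show "padic_divide p (padic_add p x y) (padic_sub p x y) \<in> padic p"
    using Qp.nonzero_inv \<open>x \<ominus>\<^bsub>Qp p\<^esub> y \<noteq> \<zero>\<^bsub>Qp p\<^esub>\<close> \<open>x \<ominus>\<^bsub>Qp p\<^esub> y \<in> padic p\<close> assms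
      Qp.a_closed Qp.m_closed
    by simp
qed

lemma padic_SD_map_imp_padic_sd_map:
  assumes "padic_SD_map p f"
  shows "padic_sd_map (Qp p) Qp_of_rat p Qp_val f"
proof (intro padic_sd_map.intro Qp_padic_like_field sd_map.intro sd_map_axioms.intro)
  show "rat_field (Qp p) Qp_of_rat"
    using Qp_padic_like_field padic_like_field.axioms(1) by blast
  fix x y
  assume "x \<in> carrier (Qp p)" "y \<in> carrier (Qp p)" "x \<noteq> y"
  with assms show "f x \<noteq> f y"
    and "f ((x \<oplus>\<^bsub>Qp p\<^esub> y) \<otimes>\<^bsub>Qp p\<^esub> inv\<^bsub>Qp p\<^esub> (x \<ominus>\<^bsub>Qp p\<^esub> y)) =
      (f x \<oplus>\<^bsub>Qp p\<^esub> f y) \<otimes>\<^bsub>Qp p\<^esub> inv\<^bsub>Qp p\<^esub> (f x \<ominus>\<^bsub>Qp p\<^esub> f y)"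
    unfolding padic_SD_map_def by (simp_all add: padic_sd_quotient)
qed (use assms in \<open>simp add: padic_SD_map_def\<close>)

lemma padic_SD_map_id_on: "(\<And>x. x \<in> padic p \<Longrightarrow> f x = x) \<Longrightarrow> padic_SD_map p f"
  unfolding padic_SD_map_def by (simp add: padic_sd_quotient(2))

end

theorem theoremA1:
  fixes p :: nat
  assumes "prime p"
  shows "padic_SD p = {f. \<forall>x\<in>padic p. f x = x}"
proof -
  interpret prime_padic p using assms by (rule prime_padic.intro)
  have "f \<in> padic_SD p \<longleftrightarrow> (\<forall>x\<in>padic p. f x = x)" for f
  proof
    assume "f \<in> padic_SD p"
    then interpret padic_sd_map "Qp p" Qp_of_rat p Qp_val f
      unfolding padic_SD_def by (simp add: padic_SD_map_imp_padic_sd_map)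
    show "\<forall>x\<in>padic p. f x = x" using f_id by simp
  next
    assume "\<forall>x\<in>padic p. f x = x"
    then show "f \<in> padic_SD p"
      unfolding padic_SD_def using padic_SD_map_id_on by force
  qed
  then show ?thesis by blast
qed

end
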